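(* In a generalised differential Seely category, for all morphisms $f:X\to Y$ and $g:X\to Z$ of $\mathscr C$, $\mathrm D(\langle f,g\rangle)=\langle\mathrm D(f),\mathrm D(g)\rangle_X;\langle f,g\rangle^*\varphi^{-1}_{Y,Z}$, where $\langle\mathrm D(f),\mathrm D(g)\rangle_X:(X,\lambda(X))\to(X,\lambda(Y)\oplus\lambda(Z))$ is the pairing in the fibre $LS(\mathscr C)_X$.
   Context: Composition is diagrammatic; monoidal categories are strict. Setting: an LNL adjunction $\mathcal F\dashv\mathcal U$, $\mathcal F:\mathscr C\to\mathcal L$, between cartesian $(\mathscr C,\times,I)$ and symmetric monoidal $(\mathcal L,\otimes,1)$; $\mathcal U$ lax monoidal via $n_{A,B}$; $\mathcal F$ strong monoidal via isomorphisms $m_{X,Y}:\mathcal F(X)\otimes\mathcal F(Y)\to\mathcal F(X\times Y)$, $m_1$; unit $\eta$; $\mathbf c_X:=\mathcal F(\Delta_X);m_{X,X}^{-1}$, $\mathbf w_X:=\mathcal F(t_X);m_1^{-1}$. $LS(\mathscr C)$: objects $(X,A)$; morphisms $(f,u):(X,A)\to(Y,B)$ with $f:X\to Y$, $u:\mathcal F(X)\otimes A\to B$; composition $(f,u);(g,v)=(f;g,(\mathbf c_X\otimes\mathrm{id}_A);(\mathcal F(f)\otimes u);v)$; identity $(\mathrm{id}_X,\mathbf w_X\otimes\mathrm{id}_A)$; $\mathbf{ls}(f,u)=f$; fibre $LS(\mathscr C)_X$ = morphisms $(\mathrm{id}_X,u)$; reindexing along $h:X\to Y$: $h^*(Y,B)=(X,B)$,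 $h^*(\mathrm{id}_Y,v)=(\mathrm{id}_X,(\mathcal F(h)\otimes\mathrm{id}_B);v)$. When $\mathcal L$ has biproducts $\oplus$, each fibre has biproducts $(X,A)\oplus_X(X,B)=(X,A\oplus B)$ (pairing $\langle(\mathrm{id}_X,u),(\mathrm{id}_X,v)\rangle_X=(\mathrm{id}_X,\langle u,v\rangle)$, injections $\iota^X_i=(\mathrm{id}_X,\mathbf w_X\otimes\iota_i)$) and $LS(\mathscr C)$ has products $(X\times Y,A\oplus B)$ with projections $(\pi_i,\mathbf w_{X\times Y}\otimes\pi_i)$. GDSC: $\mathcal L$ additive (CMon-enriched, $\otimes$ bilinear) with finite products, and a functor $\mathcal T:\mathscr C\to LS(\mathscr C)$ with: (t.1) $\mathbf{ls}\circ\mathcal T=\mathrm{id}$, so $\mathcal T(X)=(X,\lambda(X))$, and $\varphi_{X,Y}:=\langle\mathcal T(\pi_1),\mathcal T(\pi_2)\rangle:\mathcal T(X\times Y)\to(X\times Y,\lambda(X)\oplus\lambda(Y))$ is an isomorphism (it is vertical); (t.2) $\mathcal T(\mathcal U(A))=(\mathcal U(A),A)$; (t.3) with $i^{X,Y}_2:=\iota^{X\times Y}_2;\varphi^{-1}_{X,Y}$, $⦃(f,u)⦄:=\langle\pi_1;f,(\eta_X\times\mathrm{id});n_{\mathcal F(X),A};\mathcal U(u)\rangle$, $W(f,u):=(⦃(f,u)⦄,(\mathcal F(\pi_1)\otimes\mathrm{id}_A);u)$: $W(f,u);i^{Y,\mathcal U(B)}_2=i^{X,\mathcal U(A)}_2;\mathcal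 T(⦃(f,u)⦄)$. Differential: for $f:X\to Y$ with $\mathcal T(f)=(f,u)$, $\mathrm D(f):=(\mathrm{id}_X,u):(X,\lambda(X))\to(X,\lambda(Y))$. *)

theory Defs
  imports Main
begin

section \<open>Categories (composition written diagrammatically: cmp f g = f;g)\<close>

definition is_category :: "'a set \<Rightarrow> ('a \<Rightarrow> 'a \<Rightarrow> 'f set) \<Rightarrow> ('f \<Rightarrow> 'f \<Rightarrow> 'f) \<Rightarrow> ('a \<Rightarrow> 'f) \<Rightarrow> bool" where
  "is_category Ob Hom cmp idn \<longleftrightarrow>
     (\<forall>X\<in>Ob. idn X \<in> Hom X X) \<and>
     (\<forall>X\<in>Ob. \<forall>Y\<in>Ob. \<forall>Z\<in>Ob. \<forall>f\<in>Hom X Y. \<forall>g\<in>Hom Y Z. cmp f g \<in> Hom X Z) \<and>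
     (\<forall>X\<in>Ob. \<forall>Y\<in>Ob. \<forall>f\<in>Hom X Y. cmp (idn X) f = f \<and> cmp f (idn Y) = f) \<and>
     (\<forall>W\<in>Ob. \<forall>X\<in>Ob. \<forall>Y\<in>Ob. \<forall>Z\<in>Ob. \<forall>f\<in>Hom W X. \<forall>g\<in>Hom X Y. \<forall>h\<in>Hom Y Z.
        cmp (cmp f g) h = cmp f (cmp g h))"

section \<open>The cartesian category C (chosen finite products)\<close>

record ('a, 'f) cartcat =
  cOb :: "'a set"
  cHom :: "'a \<Rightarrow> 'a \<Rightarrow> 'f set"
  ccmp :: "'f \<Rightarrow> 'f \<Rightarrow> 'f"
  cidn :: "'a \<Rightarrow> 'f"
  cprd :: "'a \<Rightarrow> 'a \<Rightarrow> 'a"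
  cp1 :: "'a \<Rightarrow> 'a \<Rightarrow> 'f"
  cp2 :: "'a \<Rightarrow> 'a \<Rightarrow> 'f"
  cpair :: "'f \<Rightarrow> 'f \<Rightarrow> 'f"
  ctrm :: 'a
  cbang :: "'a \<Rightarrow> 'f"

definition cartesian :: "('a, 'f) cartcat \<Rightarrow> bool" where
  "cartesian C \<longleftrightarrow>
     is_category (cOb C) (cHom C) (ccmp C) (cidn C) \<and>
     ctrm C \<in> cOb C \<and>
     (\<forall>X\<in>cOb C. cbang C X \<in> cHom C X (ctrm C) \<and> (\<forall>h\<in>cHom C X (ctrm C). h = cbang C X)) \<and>
     (\<forall>X\<in>cOb C. \<forall>Y\<in>cOb C.
        cprd C X Y \<in> cOb C \<and>
        cp1 C X Y \<in> cHom C (cprd C X Y) X \<and> cp2 C X Y \<in> cHom C (cprd C X Y) Y \<and>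
        (\<forall>W\<in>cOb C. \<forall>f\<in>cHom C W X. \<forall>g\<in>cHom C W Y.
           cpair C f g \<in> cHom C W (cprd C X Y) \<and>
           ccmp C (cpair C f g) (cp1 C X Y) = f \<and> ccmp C (cpair C f g) (cp2 C X Y) = g \<and>
           (\<forall>h\<in>cHom C W (cprd C X Y).
              ccmp C h (cp1 C X Y) = f \<and> ccmp C h (cp2 C X Y) = g \<longrightarrow> h = cpair C f g)))"

definition cfx :: "('a, 'f) cartcat \<Rightarrow> 'a \<Rightarrow> 'a \<Rightarrow> 'f \<Rightarrow> 'f \<Rightarrow> 'f" where
  "cfx C X Y f g = cpair C (ccmp C (cp1 C X Y) f) (ccmp C (cp2 C X Y) g)"

definition cswap :: "('a, 'f) cartcat \<Rightarrow> 'a \<Rightarrow> 'a \<Rightarrow> 'f" where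
  "cswap C X Y = cpair C (cp2 C X Y) (cp1 C X Y)"

definition cassoc :: "('a, 'f) cartcat \<Rightarrow> 'a \<Rightarrow> 'a \<Rightarrow> 'a \<Rightarrow> 'f" where
  "cassoc C X Y Z =
     cpair C (ccmp C (cp1 C (cprd C X Y) Z) (cp1 C X Y))
             (cpair C (ccmp C (cp1 C (cprd C X Y) Z) (cp2 C X Y)) (cp2 C (cprd C X Y) Z))"

section \<open>The additive strict symmetric monoidal category L with finite (bi)products\<close>

record ('o, 'm) addsmc =
  lOb :: "'o set"
  lHom :: "'o \<Rightarrow> 'o \<Rightarrow> 'm set"
  lcmp :: "'m \<Rightarrow> 'm \<Rightarrow> 'm"
  lidn :: "'o \<Rightarrow> 'm"
  tno :: "'o \<Rightarrow> 'o \<Rightarrow> 'o"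
  tnm :: "'m \<Rightarrow> 'm \<Rightarrow> 'm"
  tunit :: 'o
  lsym :: "'o \<Rightarrow> 'o \<Rightarrow> 'm"
  lzero :: "'o \<Rightarrow> 'o \<Rightarrow> 'm"
  lplus :: "'m \<Rightarrow> 'm \<Rightarrow> 'm"
  bpo :: "'o \<Rightarrow> 'o \<Rightarrow> 'o"
  lpj1 :: "'o \<Rightarrow> 'o \<Rightarrow> 'm"
  lpj2 :: "'o \<Rightarrow> 'o \<Rightarrow> 'm"
  lpair :: "'m \<Rightarrow> 'm \<Rightarrow> 'm"
  linj1 :: "'o \<Rightarrow> 'o \<Rightarrow> 'm"
  linj2 :: "'o \<Rightarrow> 'o \<Rightarrow> 'm"
  ltrm :: 'o

definition strict_smc :: "('o, 'm) addsmc \<Rightarrow> bool" where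
  "strict_smc L \<longleftrightarrow>
     is_category (lOb L) (lHom L) (lcmp L) (lidn L) \<and>
     tunit L \<in> lOb L \<and>
     (\<forall>A\<in>lOb L. \<forall>B\<in>lOb L. tno L A B \<in> lOb L) \<and>
     (\<forall>A\<in>lOb L. \<forall>B\<in>lOb L. \<forall>C\<in>lOb L. \<forall>D\<in>lOb L. \<forall>f\<in>lHom L A B. \<forall>g\<in>lHom L C D.
        tnm L f g \<in> lHom L (tno L A C) (tno L B D)) \<and>
     (\<forall>A\<in>lOb L. \<forall>B\<in>lOb L. tnm L (lidn L A) (lidn L B) = lidn L (tno L A B)) \<and>
     (\<forall>A\<in>lOb L. \<forall>B\<in>lOb L. \<forall>C\<in>lOb L. \<forall>A'\<in>lOb L. \<forall>B'\<in>lOb L. \<forall>C'\<in>lOb L.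
        \<forall>f\<in>lHom L A B. \<forall>f'\<in>lHom L B C. \<forall>g\<in>lHom L A' B'. \<forall>g'\<in>lHom L B' C'.
        tnm L (lcmp L f f') (lcmp L g g') = lcmp L (tnm L f g) (tnm L f' g')) \<and>
     (\<forall>A\<in>lOb L. \<forall>B\<in>lOb L. \<forall>C\<in>lOb L. tno L (tno L A B) C = tno L A (tno L B C)) \<and>
     (\<forall>A\<in>lOb L. tno L (tunit L) A = A \<and> tno L A (tunit L) = A) \<and>
     (\<forall>A\<in>lOb L. \<forall>B\<in>lOb L. \<forall>C\<in>lOb L. \<forall>A'\<in>lOb L. \<forall>B'\<in>lOb L. \<forall>C'\<in>lOb L.
        \<forall>f\<in>lHom L A A'. \<forall>g\<in>lHom L B B'. \<forall>h\<in>lHom L C C'.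
        tnm L (tnm L f g) h = tnm L f (tnm L g h)) \<and>
     (\<forall>A\<in>lOb L. \<forall>B\<in>lOb L. \<forall>f\<in>lHom L A B.
        tnm L (lidn L (tunit L)) f = f \<and> tnm L f (lidn L (tunit L)) = f) \<and>
     (\<forall>A\<in>lOb L. \<forall>B\<in>lOb L. lsym L A B \<in> lHom L (tno L A B) (tno L B A)) \<and>
     (\<forall>A\<in>lOb L. \<forall>B\<in>lOb L. \<forall>A'\<in>lOb L. \<forall>B'\<in>lOb L. \<forall>f\<in>lHom L A A'. \<forall>g\<in>lHom L B B'.
        lcmp L (tnm L f g) (lsym L A' B') = lcmp L (lsym L A B) (tnm L g f)) \<and>
     (\<forall>A\<in>lOb L. \<forall>B\<in>lOb L. lcmp L (lsym L A B) (lsym L B A) = lidn L (tno L A B)) \<and>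
     (\<forall>A\<in>lOb L. \<forall>B\<in>lOb L. \<forall>C\<in>lOb L.
        lsym L A (tno L B C) = lcmp L (tnm L (lsym L A B) (lidn L C)) (tnm L (lidn L B) (lsym L A C))) \<and>
     (\<forall>A\<in>lOb L. lsym L A (tunit L) = lidn L A)"

definition additive :: "('o, 'm) addsmc \<Rightarrow> bool" where
  "additive L \<longleftrightarrow>
     (\<forall>A\<in>lOb L. \<forall>B\<in>lOb L.
        lzero L A B \<in> lHom L A B \<and>
        (\<forall>f\<in>lHom L A B. \<forall>g\<in>lHom L A B. lplus L f g \<in> lHom L A B \<and> lplus L f g = lplus L g f) \<and>
        (\<forall>f\<in>lHom L A B. \<forall>g\<in>lHom L A B. \<forall>h\<in>lHom L A B.
           lplus L (lplus L f g) h = lplus L f (lplus L g h)) \<and>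
        (\<forall>f\<in>lHom L A B. lplus L f (lzero L A B) = f)) \<and>
     (\<forall>A\<in>lOb L. \<forall>B\<in>lOb L. \<forall>C\<in>lOb L. \<forall>f\<in>lHom L A B. \<forall>g\<in>lHom L A B. \<forall>h\<in>lHom L B C.
        lcmp L (lplus L f g) h = lplus L (lcmp L f h) (lcmp L g h) \<and>
        lcmp L (lzero L A B) h = lzero L A C) \<and>
     (\<forall>A\<in>lOb L. \<forall>B\<in>lOb L. \<forall>C\<in>lOb L. \<forall>h\<in>lHom L A B. \<forall>f\<in>lHom L B C. \<forall>g\<in>lHom L B C.
        lcmp L h (lplus L f g) = lplus L (lcmp L h f) (lcmp L h g) \<and>
        lcmp L h (lzero L B C) = lzero L A C) \<and>
     (\<forall>A\<in>lOb L. \<forall>B\<in>lOb L. \<forall>C\<in>lOb L. \<forall>D\<in>lOb L.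
        \<forall>f\<in>lHom L A B. \<forall>g\<in>lHom L A B. \<forall>h\<in>lHom L C D.
        tnm L (lplus L f g) h = lplus L (tnm L f h) (tnm L g h) \<and>
        tnm L h (lplus L f g) = lplus L (tnm L h f) (tnm L h g) \<and>
        tnm L (lzero L A B) h = lzero L (tno L A C) (tno L B D) \<and>
        tnm L h (lzero L A B) = lzero L (tno L C A) (tno L D B))"

definition has_biproducts :: "('o, 'm) addsmc \<Rightarrow> bool" where
  "has_biproducts L \<longleftrightarrow>
     ltrm L \<in> lOb L \<and>
     (\<forall>A\<in>lOb L. lHom L A (ltrm L) = {lzero L A (ltrm L)}) \<and>
     (\<forall>A\<in>lOb L. \<forall>B\<in>lOb L.
        bpo L A B \<in> lOb L \<and>
        lpj1 L A B \<in> lHom L (bpo L A B) A \<and> lpj2 L A B \<in> lHom L (bpo L A B) B \<and>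
        linj1 L A B \<in> lHom L A (bpo L A B) \<and> linj2 L A B \<in> lHom L B (bpo L A B) \<and>
        lcmp L (linj1 L A B) (lpj1 L A B) = lidn L A \<and>
        lcmp L (linj2 L A B) (lpj2 L A B) = lidn L B \<and>
        lcmp L (linj1 L A B) (lpj2 L A B) = lzero L A B \<and>
        lcmp L (linj2 L A B) (lpj1 L A B) = lzero L B A \<and>
        lplus L (lcmp L (lpj1 L A B) (linj1 L A B)) (lcmp L (lpj2 L A B) (linj2 L A B))
          = lidn L (bpo L A B) \<and>
        (\<forall>W\<in>lOb L. \<forall>u\<in>lHom L W A. \<forall>v\<in>lHom L W B.
           lpair L u v \<in> lHom L W (bpo L A B) \<and>
           lcmp L (lpair L u v) (lpj1 L A B) = u \<and> lcmp L (lpair L u v) (lpj2 L A B) = v \<and>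
           (\<forall>h\<in>lHom L W (bpo L A B).
              lcmp L h (lpj1 L A B) = u \<and> lcmp L h (lpj2 L A B) = v \<longrightarrow> h = lpair L u v)))"

section \<open>LNL adjunction data\<close>

record ('a, 'f, 'o, 'm) lnl =
  Fo :: "'a \<Rightarrow> 'o"
  Fm :: "'f \<Rightarrow> 'm"
  Uo :: "'o \<Rightarrow> 'a"
  Um :: "'m \<Rightarrow> 'f"
  eta :: "'a \<Rightarrow> 'f"
  eps :: "'o \<Rightarrow> 'm"
  mm :: "'a \<Rightarrow> 'a \<Rightarrow> 'm"
  mminv :: "'a \<Rightarrow> 'a \<Rightarrow> 'm"
  m1 :: 'm
  m1inv :: 'm
  nn :: "'o \<Rightarrow> 'o \<Rightarrow> 'f"
  n1 :: 'f

definition lnl_adjunction ::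
  "('a, 'f) cartcat \<Rightarrow> ('o, 'm) addsmc \<Rightarrow> ('a, 'f, 'o, 'm) lnl \<Rightarrow> bool" where
  "lnl_adjunction C L A \<longleftrightarrow>
     \<comment> \<open>F : C \<rightarrow> L functor\<close>
     (\<forall>X\<in>cOb C. Fo A X \<in> lOb L \<and> Fm A (cidn C X) = lidn L (Fo A X)) \<and>
     (\<forall>X\<in>cOb C. \<forall>Y\<in>cOb C. \<forall>f\<in>cHom C X Y. Fm A f \<in> lHom L (Fo A X) (Fo A Y)) \<and>
     (\<forall>X\<in>cOb C. \<forall>Y\<in>cOb C. \<forall>Z\<in>cOb C. \<forall>f\<in>cHom C X Y. \<forall>g\<in>cHom C Y Z.
        Fm A (ccmp C f g) = lcmp L (Fm A f) (Fm A g)) \<and>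
     \<comment> \<open>U : L \<rightarrow> C functor\<close>
     (\<forall>B\<in>lOb L. Uo A B \<in> cOb C \<and> Um A (lidn L B) = cidn C (Uo A B)) \<and>
     (\<forall>B\<in>lOb L. \<forall>B'\<in>lOb L. \<forall>u\<in>lHom L B B'. Um A u \<in> cHom C (Uo A B) (Uo A B')) \<and>
     (\<forall>B\<in>lOb L. \<forall>B'\<in>lOb L. \<forall>B''\<in>lOb L. \<forall>u\<in>lHom L B B'. \<forall>v\<in>lHom L B' B''.
        Um A (lcmp L u v) = ccmp C (Um A u) (Um A v)) \<and>
     \<comment> \<open>adjunction F \<turnstile> U with unit eta and counit eps\<close>
     (\<forall>X\<in>cOb C. eta A X \<in> cHom C X (Uo A (Fo A X))) \<and>
     (\<forall>X\<in>cOb C. \<forall>Y\<in>cOb C. \<forall>f\<in>cHom C X Y.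
        ccmp C f (eta A Y) = ccmp C (eta A X) (Um A (Fm A f))) \<and>
     (\<forall>B\<in>lOb L. eps A B \<in> lHom L (Fo A (Uo A B)) B) \<and>
     (\<forall>B\<in>lOb L. \<forall>B'\<in>lOb L. \<forall>u\<in>lHom L B B'.
        lcmp L (Fm A (Um A u)) (eps A B') = lcmp L (eps A B) u) \<and>
     (\<forall>X\<in>cOb C. lcmp L (Fm A (eta A X)) (eps A (Fo A X)) = lidn L (Fo A X)) \<and>
     (\<forall>B\<in>lOb L. ccmp C (eta A (Uo A B)) (Um A (eps A B)) = cidn C (Uo A B)) \<and>
     \<comment> \<open>F strong symmetric monoidal via m, m1\<close>
     (\<forall>X\<in>cOb C. \<forall>Y\<in>cOb C.
        mm A X Y \<in> lHom L (tno L (Fo A X) (Fo A Y)) (Fo A (cprd C X Y)) \<and>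
        mminv A X Y \<in> lHom L (Fo A (cprd C X Y)) (tno L (Fo A X) (Fo A Y)) \<and>
        lcmp L (mm A X Y) (mminv A X Y) = lidn L (tno L (Fo A X) (Fo A Y)) \<and>
        lcmp L (mminv A X Y) (mm A X Y) = lidn L (Fo A (cprd C X Y))) \<and>
     m1 A \<in> lHom L (tunit L) (Fo A (ctrm C)) \<and>
     m1inv A \<in> lHom L (Fo A (ctrm C)) (tunit L) \<and>
     lcmp L (m1 A) (m1inv A) = lidn L (tunit L) \<and>
     lcmp L (m1inv A) (m1 A) = lidn L (Fo A (ctrm C)) \<and>
     (\<forall>X\<in>cOb C. \<forall>Y\<in>cOb C. \<forall>X'\<in>cOb C. \<forall>Y'\<in>cOb C. \<forall>f\<in>cHom C X X'. \<forall>g\<in>cHom C Y Y'.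
        lcmp L (tnm L (Fm A f) (Fm A g)) (mm A X' Y') = lcmp L (mm A X Y) (Fm A (cfx C X Y f g))) \<and>
     (\<forall>X\<in>cOb C. \<forall>Y\<in>cOb C. \<forall>Z\<in>cOb C.
        lcmp L (lcmp L (tnm L (mm A X Y) (lidn L (Fo A Z))) (mm A (cprd C X Y) Z)) (Fm A (cassoc C X Y Z))
        = lcmp L (tnm L (lidn L (Fo A X)) (mm A Y Z)) (mm A X (cprd C Y Z))) \<and>
     (\<forall>X\<in>cOb C.
        lcmp L (lcmp L (tnm L (m1 A) (lidn L (Fo A X))) (mm A (ctrm C) X)) (Fm A (cp2 C (ctrm C) X))
          = lidn L (Fo A X) \<and>
        lcmp L (lcmp L (tnm L (lidn L (Fo A X)) (m1 A)) (mm A X (ctrm C))) (Fm A (cp1 C X (ctrm C)))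
          = lidn L (Fo A X)) \<and>
     (\<forall>X\<in>cOb C. \<forall>Y\<in>cOb C.
        lcmp L (mm A X Y) (Fm A (cswap C X Y)) = lcmp L (lsym L (Fo A X) (Fo A Y)) (mm A Y X)) \<and>
     \<comment> \<open>U lax symmetric monoidal via n, n1\<close>
     (\<forall>B\<in>lOb L. \<forall>B'\<in>lOb L. nn A B B' \<in> cHom C (cprd C (Uo A B) (Uo A B')) (Uo A (tno L B B'))) \<and>
     n1 A \<in> cHom C (ctrm C) (Uo A (tunit L)) \<and>
     (\<forall>B\<in>lOb L. \<forall>B'\<in>lOb L. \<forall>D\<in>lOb L. \<forall>D'\<in>lOb L. \<forall>u\<in>lHom L B D. \<forall>v\<in>lHom L B' D'.
        ccmp C (cfx C (Uo A B) (Uo A B') (Um A u) (Um A v)) (nn A D D')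
          = ccmp C (nn A B B') (Um A (tnm L u v))) \<and>
     (\<forall>B\<in>lOb L. \<forall>B'\<in>lOb L. \<forall>B''\<in>lOb L.
        ccmp C (cfx C (cprd C (Uo A B) (Uo A B')) (Uo A B'') (nn A B B') (cidn C (Uo A B''))) (nn A (tno L B B') B'')
          = ccmp C (ccmp C (cassoc C (Uo A B) (Uo A B') (Uo A B''))
                     (cfx C (Uo A B) (cprd C (Uo A B') (Uo A B'')) (cidn C (Uo A B)) (nn A B' B'')))
                   (nn A B (tno L B' B''))) \<and>
     (\<forall>B\<in>lOb L.
        ccmp C (cfx C (ctrm C) (Uo A B) (n1 A) (cidn C (Uo A B))) (nn A (tunit L) B) = cp2 C (ctrm C) (Uo A B) \<and>
        ccmp C (cfx C (Uo A B) (ctrm C) (cidn C (Uo A B)) (n1 A)) (nn A B (tunit L)) = cp1 C (Uo A B) (ctrm C)) \<and>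
     (\<forall>B\<in>lOb L. \<forall>B'\<in>lOb L.
        ccmp C (nn A B B') (Um A (lsym L B B')) = ccmp C (cswap C (Uo A B) (Uo A B')) (nn A B' B)) \<and>
     \<comment> \<open>the adjunction is monoidal: unit and counit are monoidal natural transformations\<close>
     (\<forall>X\<in>cOb C. \<forall>Y\<in>cOb C.
        ccmp C (ccmp C (cfx C X Y (eta A X) (eta A Y)) (nn A (Fo A X) (Fo A Y))) (Um A (mm A X Y))
          = eta A (cprd C X Y)) \<and>
     ccmp C (n1 A) (Um A (m1 A)) = eta A (ctrm C) \<and>
     (\<forall>B\<in>lOb L. \<forall>B'\<in>lOb L.
        lcmp L (lcmp L (mm A (Uo A B) (Uo A B')) (Fm A (nn A B B'))) (eps A (tno L B B'))
          = tnm L (eps A B) (eps A B')) \<and>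
     lcmp L (lcmp L (m1 A) (Fm A (n1 A))) (eps A (tunit L)) = lidn L (tunit L)"

section \<open>The category LS(C)\<close>

definition cX :: "('a, 'f) cartcat \<Rightarrow> ('o, 'm) addsmc \<Rightarrow> ('a, 'f, 'o, 'm) lnl \<Rightarrow> 'a \<Rightarrow> 'm" where
  "cX C L A X = lcmp L (Fm A (cpair C (cidn C X) (cidn C X))) (mminv A X X)"

definition wX :: "('a, 'f) cartcat \<Rightarrow> ('o, 'm) addsmc \<Rightarrow> ('a, 'f, 'o, 'm) lnl \<Rightarrow> 'a \<Rightarrow> 'm" where
  "wX C L A X = lcmp L (Fm A (cbang C X)) (m1inv A)"

definition ls_hom :: "('a, 'f) cartcat \<Rightarrow> ('o, 'm) addsmc \<Rightarrow> ('a, 'f, 'o, 'm) lnl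
    \<Rightarrow> 'a \<times> 'o \<Rightarrow> 'a \<times> 'o \<Rightarrow> ('f \<times> 'm) set" where
  "ls_hom C L A XA YB = {(f, u). f \<in> cHom C (fst XA) (fst YB) \<and>
                                  u \<in> lHom L (tno L (Fo A (fst XA)) (snd XA)) (snd YB)}"

definition ls_comp :: "('a, 'f) cartcat \<Rightarrow> ('o, 'm) addsmc \<Rightarrow> ('a, 'f, 'o, 'm) lnl
    \<Rightarrow> 'a \<Rightarrow> 'o \<Rightarrow> 'f \<times> 'm \<Rightarrow> 'f \<times> 'm \<Rightarrow> 'f \<times> 'm" where
  "ls_comp C L A X B0 fu gv =
     (ccmp C (fst fu) (fst gv),
      lcmp L (lcmp L (tnm L (cX C L A X) (lidn L B0)) (tnm L (Fm A (fst fu)) (snd fu))) (snd gv))"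

definition ls_id :: "('a, 'f) cartcat \<Rightarrow> ('o, 'm) addsmc \<Rightarrow> ('a, 'f, 'o, 'm) lnl
    \<Rightarrow> 'a \<Rightarrow> 'o \<Rightarrow> 'f \<times> 'm" where
  "ls_id C L A X B0 = (cidn C X, tnm L (wX C L A X) (lidn L B0))"

definition ls_is_inverse :: "('a, 'f) cartcat \<Rightarrow> ('o, 'm) addsmc \<Rightarrow> ('a, 'f, 'o, 'm) lnl
    \<Rightarrow> 'a \<times> 'o \<Rightarrow> 'a \<times> 'o \<Rightarrow> 'f \<times> 'm \<Rightarrow> 'f \<times> 'm \<Rightarrow> bool" where
  "ls_is_inverse C L A XA YB h k \<longleftrightarrow>
     h \<in> ls_hom C L A XA YB \<and> k \<in> ls_hom C L A YB XA \<and>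
     ls_comp C L A (fst XA) (snd XA) h k = ls_id C L A (fst XA) (snd XA) \<and>
     ls_comp C L A (fst YB) (snd YB) k h = ls_id C L A (fst YB) (snd YB)"

definition ls_inv :: "('a, 'f) cartcat \<Rightarrow> ('o, 'm) addsmc \<Rightarrow> ('a, 'f, 'o, 'm) lnl
    \<Rightarrow> 'a \<times> 'o \<Rightarrow> 'a \<times> 'o \<Rightarrow> 'f \<times> 'm \<Rightarrow> 'f \<times> 'm" where
  "ls_inv C L A XA YB h = (THE k. ls_is_inverse C L A XA YB h k)"

text \<open>Pairing in the fibre over X: <(id,u),(id,v)>_X = (id, <u,v>)\<close>
definition fib_pair :: "('a, 'f) cartcat \<Rightarrow> ('o, 'm) addsmc \<Rightarrow> 'a \<Rightarrow> 'f \<times> 'm \<Rightarrow> 'f \<times> 'm \<Rightarrow> 'f \<times> 'm" where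
  "fib_pair C L X fu gv = (cidn C X, lpair L (snd fu) (snd gv))"

text \<open>Reindexing h^* (id_Y, v) = (id_X, (F h \<otimes> id_B); v) along h : X \<rightarrow> Y, for v out of (Y,B)\<close>
definition reindex :: "('a, 'f) cartcat \<Rightarrow> ('o, 'm) addsmc \<Rightarrow> ('a, 'f, 'o, 'm) lnl
    \<Rightarrow> 'a \<Rightarrow> 'f \<Rightarrow> 'o \<Rightarrow> 'f \<times> 'm \<Rightarrow> 'f \<times> 'm" where
  "reindex C L A X h B v = (cidn C X, lcmp L (tnm L (Fm A h) (lidn L B)) (snd v))"

definition ls_pair :: "('a, 'f) cartcat \<Rightarrow> ('o, 'm) addsmc \<Rightarrow> 'f \<times> 'm \<Rightarrow> 'f \<times> 'm \<Rightarrow> 'f \<times> 'm" where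
  "ls_pair C L fu gv = (cpair C (fst fu) (fst gv), lpair L (snd fu) (snd gv))"

section \<open>Generalised differential Seely categories\<close>

text \<open>The functor T : C \<rightarrow> LS(C) with ls \<circ> T = id: T(X) = (X, Tl X), T(f) = (f, Tm f)\<close>
record ('a, 'f, 'o, 'm) tfun =
  Tl :: "'a \<Rightarrow> 'o"
  Tm :: "'f \<Rightarrow> 'm"

definition Tmor :: "('a, 'f, 'o, 'm) tfun \<Rightarrow> 'f \<Rightarrow> 'f \<times> 'm" where
  "Tmor T f = (f, Tm T f)"

definition phi :: "('a, 'f) cartcat \<Rightarrow> ('o, 'm) addsmc \<Rightarrow> ('a, 'f, 'o, 'm) tfun \<Rightarrow> 'a \<Rightarrow> 'a \<Rightarrow> 'f \<times> 'm" where
  "phi C L T X Y = ls_pair C L (Tmor T (cp1 C X Y)) (Tmor T (cp2 C X Y))"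

definition phi_inv :: "('a, 'f) cartcat \<Rightarrow> ('o, 'm) addsmc \<Rightarrow> ('a, 'f, 'o, 'm) lnl
    \<Rightarrow> ('a, 'f, 'o, 'm) tfun \<Rightarrow> 'a \<Rightarrow> 'a \<Rightarrow> 'f \<times> 'm" where
  "phi_inv C L A T X Y =
     ls_inv C L A (cprd C X Y, Tl T (cprd C X Y)) (cprd C X Y, bpo L (Tl T X) (Tl T Y)) (phi C L T X Y)"

text \<open>i_2^{X,Y} = iota_2^{X \<times> Y} ; phi^{-1}_{X,Y}\<close>
definition i2 :: "('a, 'f) cartcat \<Rightarrow> ('o, 'm) addsmc \<Rightarrow> ('a, 'f, 'o, 'm) lnl
    \<Rightarrow> ('a, 'f, 'o, 'm) tfun \<Rightarrow> 'a \<Rightarrow> 'a \<Rightarrow> 'f \<times> 'm" where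
  "i2 C L A T X Y =
     ls_comp C L A (cprd C X Y) (Tl T Y)
       (cidn C (cprd C X Y), tnm L (wX C L A (cprd C X Y)) (linj2 L (Tl T X) (Tl T Y)))
       (phi_inv C L A T X Y)"

definition brk :: "('a, 'f) cartcat \<Rightarrow> ('o, 'm) addsmc \<Rightarrow> ('a, 'f, 'o, 'm) lnl
    \<Rightarrow> 'a \<Rightarrow> 'o \<Rightarrow> 'f \<times> 'm \<Rightarrow> 'f" where
  "brk C L A X B fu =
     cpair C (ccmp C (cp1 C X (Uo A B)) (fst fu))
       (ccmp C (ccmp C (cfx C X (Uo A B) (eta A X) (cidn C (Uo A B))) (nn A (Fo A X) B)) (Um A (snd fu)))"

definition Wmap :: "('a, 'f) cartcat \<Rightarrow> ('o, 'm) addsmc \<Rightarrow> ('a, 'f, 'o, 'm) lnl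
    \<Rightarrow> 'a \<Rightarrow> 'o \<Rightarrow> 'f \<times> 'm \<Rightarrow> 'f \<times> 'm" where
  "Wmap C L A X B fu = (brk C L A X B fu, lcmp L (tnm L (Fm A (cp1 C X (Uo A B))) (lidn L B)) (snd fu))"

definition gdsc :: "('a, 'f) cartcat \<Rightarrow> ('o, 'm) addsmc \<Rightarrow> ('a, 'f, 'o, 'm) lnl
    \<Rightarrow> ('a, 'f, 'o, 'm) tfun \<Rightarrow> bool" where
  "gdsc C L A T \<longleftrightarrow>
     cartesian C \<and> strict_smc L \<and> additive L \<and> has_biproducts L \<and> lnl_adjunction C L A \<and>
     \<comment> \<open>(t.1) T is a functor C \<rightarrow> LS(C) with ls \<circ> T = id\<close>
     (\<forall>X\<in>cOb C. Tl T X \<in> lOb L) \<and>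
     (\<forall>X\<in>cOb C. \<forall>Y\<in>cOb C. \<forall>f\<in>cHom C X Y. Tmor T f \<in> ls_hom C L A (X, Tl T X) (Y, Tl T Y)) \<and>
     (\<forall>X\<in>cOb C. Tmor T (cidn C X) = ls_id C L A X (Tl T X)) \<and>
     (\<forall>X\<in>cOb C. \<forall>Y\<in>cOb C. \<forall>Z\<in>cOb C. \<forall>f\<in>cHom C X Y. \<forall>g\<in>cHom C Y Z.
        Tmor T (ccmp C f g) = ls_comp C L A X (Tl T X) (Tmor T f) (Tmor T g)) \<and>
     \<comment> \<open>(t.1) phi_{X,Y} is an isomorphism\<close>
     (\<forall>X\<in>cOb C. \<forall>Y\<in>cOb C. \<exists>k. ls_is_inverse C L A
        (cprd C X Y, Tl T (cprd C X Y)) (cprd C X Y, bpo L (Tl T X) (Tl T Y)) (phi C L T X Y) k) \<and>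
     \<comment> \<open>(t.2) T(U(B)) = (U(B), B)\<close>
     (\<forall>B\<in>lOb L. Tl T (Uo A B) = B) \<and>
     \<comment> \<open>(t.3)\<close>
     (\<forall>X\<in>cOb C. \<forall>Y\<in>cOb C. \<forall>B\<in>lOb L. \<forall>B'\<in>lOb L. \<forall>fu\<in>ls_hom C L A (X, B) (Y, B').
        ls_comp C L A (cprd C X (Uo A B)) B (Wmap C L A X B fu) (i2 C L A T Y (Uo A B'))
        = ls_comp C L A (cprd C X (Uo A B)) B (i2 C L A T X (Uo A B)) (Tmor T (brk C L A X B fu)))"

definition Dif :: "('a, 'f) cartcat \<Rightarrow> ('a, 'f, 'o, 'm) tfun \<Rightarrow> 'a \<Rightarrow> 'f \<Rightarrow> 'f \<times> 'm" where
  "Dif C T X f = (cidn C X, Tm T f)"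

end

theory Submission
  imports Defs
begin

text \<open>
  By (t.1), T is a functor into LS(C) over C, so T(<f,g>);T(pi_i) recovers T(f) and T(g). Since
  pairing in LS(C) is computed componentwise, T(<f,g>);phi_{Y,Z} = (<f,g>, <u,v>) where
  D(f) = (id,u) and D(g) = (id,v). Hence T(<f,g>) = (<f,g>,<u,v>);phi^-1, and any composite (h,w);k
  in LS(C) is the vertical map (id,w) followed by the reindexing h^* k.

  The inverse phi^-1 is given by a definite description, so the argument needs LS(C) to be a
  category, where inverses are unique. Its unit and associativity laws say that (F X, c_X, w_X) is a
  comonoid in L: the image of the diagonal comonoid of X in C under the strong monoidal functor F.
\<close>

locale category =
  fixes Ob :: "'o set" and Hom :: "'o \<Rightarrow> 'o \<Rightarrow> 'm set"
    and cmp :: "'m \<Rightarrow> 'm \<Rightarrow> 'm" and idn :: "'o \<Rightarrow> 'm"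
  assumes is_category: "is_category Ob Hom cmp idn"
begin

lemma idn_hom [intro]: "X \<in> Ob \<Longrightarrow> idn X \<in> Hom X X"
  using is_category by (simp add: is_category_def)

lemma cmp_hom [intro]:
  "\<lbrakk>f \<in> Hom X Y; g \<in> Hom Y Z; X \<in> Ob; Y \<in> Ob; Z \<in> Ob\<rbrakk> \<Longrightarrow> cmp f g \<in> Hom X Z"
  using is_category by (simp add: is_category_def)

lemma cmp_idn_left: "\<lbrakk>f \<in> Hom X Y; X \<in> Ob; Y \<in> Ob\<rbrakk> \<Longrightarrow> cmp (idn X) f = f"
  using is_category by (simp add: is_category_def)

lemma cmp_idn_right: "\<lbrakk>f \<in> Hom X Y; X \<in> Ob; Y \<in> Ob\<rbrakk> \<Longrightarrow> cmp f (idn Y) = f"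
  using is_category by (simp add: is_category_def)

lemma cmp_assoc:
  "\<lbrakk>f \<in> Hom W X; g \<in> Hom X Y; h \<in> Hom Y Z; W \<in> Ob; X \<in> Ob; Y \<in> Ob; Z \<in> Ob\<rbrakk>
   \<Longrightarrow> cmp (cmp f g) h = cmp f (cmp g h)"
  using is_category by (simp add: is_category_def)

lemma cmp_idn_idn [simp]: "X \<in> Ob \<Longrightarrow> cmp (idn X) (idn X) = idn X"
  by (rule cmp_idn_left[OF idn_hom])

lemma inverse_square:
  assumes "a \<in> Hom P Q" "b \<in> Hom Q R" "c \<in> Hom P S" "d \<in> Hom S R" "b' \<in> Hom R Q" "c' \<in> Hom S P"
    and "P \<in> Ob" "Q \<in> Ob" "R \<in> Ob" "S \<in> Ob"
    and "cmp b b' = idn Q" "cmp c' c = idn S" "cmp a b = cmp c d"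
  shows "cmp c' a = cmp d b'"
proof -
  have c'a: "cmp c' a \<in> Hom S Q"
    using assms by blast
  have "cmp c' a = cmp (cmp c' a) (cmp b b')"
    using assms cmp_idn_right[OF c'a] by simp
  also have "\<dots> = cmp (cmp c' (cmp a b)) b'"
    using assms cmp_assoc[OF c'a assms(2,5)] cmp_assoc[OF assms(6,1,2)] by simp
  also have "\<dots> = cmp (cmp (cmp c' c) d) b'"
    using assms cmp_assoc[OF assms(6,3,4)] by simp
  also have "\<dots> = cmp d b'"
    using assms cmp_idn_left[OF assms(4)] by simp
  finally show ?thesis .
qed

lemma cmp_inverse_cmp:
  assumes "a \<in> Hom P Q" "b \<in> Hom Q R" "a' \<in> Hom Q P" "b' \<in> Hom R Q" "P \<in> Ob" "Q \<in> Ob" "R \<in> Ob"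
    and "cmp a a' = idn P" "cmp b b' = idn Q"
  shows "cmp (cmp a b) (cmp b' a') = idn P"
  using cmp_assoc[OF assms(1,2) cmp_hom[OF assms(4,3)]] cmp_assoc[OF assms(2,4,3), symmetric]
    cmp_idn_left[OF assms(3)] assms
  by simp

lemma left_inverse_eq_right_inverse:
  assumes "t \<in> Hom P Q" "t' \<in> Hom Q P" "s \<in> Hom P Q" "P \<in> Ob" "Q \<in> Ob"
    and "cmp t t' = idn P" "cmp t' s = idn Q"
  shows "t = s"
  using cmp_idn_right[OF assms(1)] cmp_idn_left[OF assms(3)] cmp_assoc[OF assms(1-3)] assms
  by simp

end

locale cartesian_category =
  fixes C :: "('a, 'f) cartcat"
  assumes cartesian: "cartesian C"

sublocale cartesian_category \<subseteq> category "cOb C" "cHom C" "ccmp C" "cidn C"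
  using cartesian by unfold_locales (simp add: cartesian_def)

context cartesian_category
begin

abbreviation diag :: "'a \<Rightarrow> 'f" where
  "diag X \<equiv> cpair C (cidn C X) (cidn C X)"

lemma ctrm_ob [simp, intro]: "ctrm C \<in> cOb C"
  using cartesian by (simp add: cartesian_def)

lemma cbang_hom [intro]: "X \<in> cOb C \<Longrightarrow> cbang C X \<in> cHom C X (ctrm C)"
  using cartesian by (simp add: cartesian_def)

lemma cbang_unique: "\<lbrakk>X \<in> cOb C; h \<in> cHom C X (ctrm C)\<rbrakk> \<Longrightarrow> h = cbang C X"
  using cartesian by (simp add: cartesian_def)

lemma cprd_ob [simp, intro]: "\<lbrakk>X \<in> cOb C; Y \<in> cOb C\<rbrakk> \<Longrightarrow> cprd C X Y \<in> cOb C"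
  using cartesian by (simp add: cartesian_def)

lemma cp1_hom [intro]: "\<lbrakk>X \<in> cOb C; Y \<in> cOb C\<rbrakk> \<Longrightarrow> cp1 C X Y \<in> cHom C (cprd C X Y) X"
  using cartesian by (simp add: cartesian_def)

lemma cp2_hom [intro]: "\<lbrakk>X \<in> cOb C; Y \<in> cOb C\<rbrakk> \<Longrightarrow> cp2 C X Y \<in> cHom C (cprd C X Y) Y"
  using cartesian by (simp add: cartesian_def)

lemma cpair_hom [intro]:
  "\<lbrakk>f \<in> cHom C W X; g \<in> cHom C W Y; W \<in> cOb C; X \<in> cOb C; Y \<in> cOb C\<rbrakk>
   \<Longrightarrow> cpair C f g \<in> cHom C W (cprd C X Y)"
  using cartesian by (simp add: cartesian_def)

lemma cpair_cp1:
  "\<lbrakk>f \<in> cHom C W X; g \<in> cHom C W Y; W \<in> cOb C; X \<in> cOb C; Y \<in> cOb C\<rbrakk>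
   \<Longrightarrow> ccmp C (cpair C f g) (cp1 C X Y) = f"
  using cartesian by (simp add: cartesian_def)

lemma cpair_cp2:
  "\<lbrakk>f \<in> cHom C W X; g \<in> cHom C W Y; W \<in> cOb C; X \<in> cOb C; Y \<in> cOb C\<rbrakk>
   \<Longrightarrow> ccmp C (cpair C f g) (cp2 C X Y) = g"
  using cartesian by (simp add: cartesian_def)

lemma cpair_unique:
  assumes "h \<in> cHom C W (cprd C X Y)" "W \<in> cOb C" "X \<in> cOb C" "Y \<in> cOb C"
    and "ccmp C h (cp1 C X Y) = f" "ccmp C h (cp2 C X Y) = g"
  shows "h = cpair C f g"
proof -
  have "f \<in> cHom C W X" "g \<in> cHom C W Y"
    using assms by auto
  then show ?thesis
    using cartesian assms by (simp add: cartesian_def)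
qed

lemma cfx_hom [intro]:
  "\<lbrakk>f \<in> cHom C X X'; g \<in> cHom C Y Y'; X \<in> cOb C; Y \<in> cOb C; X' \<in> cOb C; Y' \<in> cOb C\<rbrakk>
   \<Longrightarrow> cfx C X Y f g \<in> cHom C (cprd C X Y) (cprd C X' Y')"
  unfolding cfx_def by blast

lemma ccmp_cpair:
  assumes "k \<in> cHom C V W" "f \<in> cHom C W X" "g \<in> cHom C W Y"
    and "V \<in> cOb C" "W \<in> cOb C" "X \<in> cOb C" "Y \<in> cOb C"
  shows "ccmp C k (cpair C f g) = cpair C (ccmp C k f) (ccmp C k g)"
proof (rule cpair_unique)
  have fg: "cpair C f g \<in> cHom C W (cprd C X Y)"
    using assms by blast
  show "ccmp C (ccmp C k (cpair C f g)) (cp1 C X Y) = ccmp C k f"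
    using assms cmp_assoc[OF assms(1) fg cp1_hom] by (simp add: cpair_cp1)
  show "ccmp C (ccmp C k (cpair C f g)) (cp2 C X Y) = ccmp C k g"
    using assms cmp_assoc[OF assms(1) fg cp2_hom] by (simp add: cpair_cp2)
qed (use assms in auto)

lemma cpair_cfx:
  assumes "f \<in> cHom C W X" "g \<in> cHom C W Y" "h \<in> cHom C X X'" "k \<in> cHom C Y Y'"
    and "W \<in> cOb C" "X \<in> cOb C" "Y \<in> cOb C" "X' \<in> cOb C" "Y' \<in> cOb C"
  shows "ccmp C (cpair C f g) (cfx C X Y h k) = cpair C (ccmp C f h) (ccmp C g k)"
proof -
  have fg: "cpair C f g \<in> cHom C W (cprd C X Y)"
    using assms by blast
  have "ccmp C (cpair C f g) (cfx C X Y h k)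
      = cpair C (ccmp C (cpair C f g) (ccmp C (cp1 C X Y) h))
        (ccmp C (cpair C f g) (ccmp C (cp2 C X Y) k))"
    unfolding cfx_def using assms by (intro ccmp_cpair) blast+
  also have "\<dots> = cpair C (ccmp C f h) (ccmp C g k)"
    using assms cmp_assoc[OF fg cp1_hom assms(3)] cmp_assoc[OF fg cp2_hom assms(4)]
    by (simp add: cpair_cp1 cpair_cp2)
  finally show ?thesis .
qed

lemma cpair_cassoc:
  assumes f: "f \<in> cHom C W X" and g: "g \<in> cHom C W Y" and h: "h \<in> cHom C W Z"
    and ob: "W \<in> cOb C" "X \<in> cOb C" "Y \<in> cOb C" "Z \<in> cOb C"
  shows "ccmp C (cpair C (cpair C f g) h) (cassoc C X Y Z) = cpair C f (cpair C g h)"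
proof -
  define k where "k = cpair C (cpair C f g) h"
  define q where "q = cp1 C (cprd C X Y) Z"
  have fg: "cpair C f g \<in> cHom C W (cprd C X Y)"
    and k: "k \<in> cHom C W (cprd C (cprd C X Y) Z)"
    and XY: "cprd C X Y \<in> cOb C"
    and q: "q \<in> cHom C (cprd C (cprd C X Y) Z) (cprd C X Y)"
    using assms by (auto simp: k_def q_def)
  have q1: "ccmp C q (cp1 C X Y) \<in> cHom C (cprd C (cprd C X Y) Z) X"
    and q2: "ccmp C q (cp2 C X Y) \<in> cHom C (cprd C (cprd C X Y) Z) Y"
    and r: "cp2 C (cprd C X Y) Z \<in> cHom C (cprd C (cprd C X Y) Z) Z"
    using q ob XY by blast+
  have kq: "ccmp C k q = cpair C f g"
    using cpair_cp1[OF fg h] ob by (simp add: k_def q_def)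
  have "ccmp C k (ccmp C q (cp1 C X Y)) = f"
    using cmp_assoc[OF k q cp1_hom] kq cpair_cp1[OF f g] ob XY by simp
  moreover have "ccmp C k (ccmp C q (cp2 C X Y)) = g"
    using cmp_assoc[OF k q cp2_hom] kq cpair_cp2[OF f g] ob XY by simp
  moreover have "ccmp C k (cp2 C (cprd C X Y) Z) = h"
    using cpair_cp2[OF fg h] ob by (simp add: k_def)
  ultimately show ?thesis
    unfolding cassoc_def q_def[symmetric] k_def[symmetric]
    using ccmp_cpair[OF k q1 cpair_hom[OF q2 r]] ccmp_cpair[OF k q2 r] ob XY by auto
qed

lemma diag_hom [intro]: "X \<in> cOb C \<Longrightarrow> diag X \<in> cHom C X (cprd C X X)"
  by blast

lemma diag_cfx:
  assumes "f \<in> cHom C X Y" "g \<in> cHom C X Z" "X \<in> cOb C" "Y \<in> cOb C" "Z \<in> cOb C"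
  shows "ccmp C (diag X) (cfx C X X f g) = cpair C f g"
  using cpair_cfx[OF idn_hom idn_hom assms(1,2)] cmp_idn_left[OF assms(1)]
    cmp_idn_left[OF assms(2)] assms
  by simp

end

locale strict_smc_category =
  fixes L :: "('o, 'm) addsmc"
  assumes strict_smc: "strict_smc L"

sublocale strict_smc_category \<subseteq> category "lOb L" "lHom L" "lcmp L" "lidn L"
  using strict_smc by unfold_locales (simp add: strict_smc_def)

context strict_smc_category
begin

lemma tunit_ob [simp, intro]: "tunit L \<in> lOb L"
  using strict_smc by (simp add: strict_smc_def)

lemma tno_ob [simp, intro]: "\<lbrakk>P \<in> lOb L; Q \<in> lOb L\<rbrakk> \<Longrightarrow> tno L P Q \<in> lOb L"
  using strict_smc by (simp add: strict_smc_def)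

lemma tnm_hom [intro]:
  "\<lbrakk>f \<in> lHom L P Q; g \<in> lHom L R S; P \<in> lOb L; Q \<in> lOb L; R \<in> lOb L; S \<in> lOb L\<rbrakk>
   \<Longrightarrow> tnm L f g \<in> lHom L (tno L P R) (tno L Q S)"
  using strict_smc by (simp add: strict_smc_def)

lemma tnm_lidn [simp]: "\<lbrakk>P \<in> lOb L; Q \<in> lOb L\<rbrakk> \<Longrightarrow> tnm L (lidn L P) (lidn L Q) = lidn L (tno L P Q)"
  using strict_smc by (simp add: strict_smc_def)

lemma tnm_lcmp:
  "\<lbrakk>f \<in> lHom L P Q; f' \<in> lHom L Q R; g \<in> lHom L P' Q'; g' \<in> lHom L Q' R';
    P \<in> lOb L; Q \<in> lOb L; R \<in> lOb L; P' \<in> lOb L; Q' \<in> lOb L; R' \<in> lOb L\<rbrakk>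
   \<Longrightarrow> tnm L (lcmp L f f') (lcmp L g g') = lcmp L (tnm L f g) (tnm L f' g')"
  using strict_smc by (simp add: strict_smc_def)

lemma tno_assoc [simp]:
  "\<lbrakk>P \<in> lOb L; Q \<in> lOb L; R \<in> lOb L\<rbrakk> \<Longrightarrow> tno L (tno L P Q) R = tno L P (tno L Q R)"
  using strict_smc by (simp add: strict_smc_def)

lemma tno_tunit [simp]: "P \<in> lOb L \<Longrightarrow> tno L (tunit L) P = P" "P \<in> lOb L \<Longrightarrow> tno L P (tunit L) = P"
  using strict_smc by (simp_all add: strict_smc_def)

lemma tnm_assoc:
  "\<lbrakk>f \<in> lHom L P P'; g \<in> lHom L Q Q'; h \<in> lHom L R R';
    P \<in> lOb L; P' \<in> lOb L; Q \<in> lOb L; Q' \<in> lOb L; R \<in> lOb L; R' \<in> lOb L\<rbrakk>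
   \<Longrightarrow> tnm L (tnm L f g) h = tnm L f (tnm L g h)"
  using strict_smc by (simp add: strict_smc_def)

lemma lcmp_tnm_lidn:
  assumes "f \<in> lHom L P Q" "g \<in> lHom L Q R" "P \<in> lOb L" "Q \<in> lOb L" "R \<in> lOb L" "S \<in> lOb L"
  shows "lcmp L (tnm L f (lidn L S)) (tnm L g (lidn L S)) = tnm L (lcmp L f g) (lidn L S)"
    and "lcmp L (tnm L (lidn L S) f) (tnm L (lidn L S) g) = tnm L (lidn L S) (lcmp L f g)"
  using tnm_lcmp[OF assms(1,2) idn_hom idn_hom] tnm_lcmp[OF idn_hom idn_hom assms(1,2)]
    assms by simp_all

lemma tnm_tunit_lidn: "\<lbrakk>f \<in> lHom L P Q; P \<in> lOb L; Q \<in> lOb L\<rbrakk> \<Longrightarrow> tnm L (lidn L (tunit L)) f = f"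
  using strict_smc by (simp add: strict_smc_def)

end

locale lnl_model = C: cartesian_category C + L: strict_smc_category L
  for C :: "('a, 'f) cartcat" and L :: "('o, 'm) addsmc" +
  fixes A :: "('a, 'f, 'o, 'm) lnl"
  assumes lnl_adjunction: "lnl_adjunction C L A"
begin

lemma Fo_ob [simp, intro]: "X \<in> cOb C \<Longrightarrow> Fo A X \<in> lOb L"
  using lnl_adjunction by (simp add: lnl_adjunction_def)

lemma Fm_cidn [simp]: "X \<in> cOb C \<Longrightarrow> Fm A (cidn C X) = lidn L (Fo A X)"
  using lnl_adjunction by (simp add: lnl_adjunction_def)

lemma Fm_hom [intro]: "\<lbrakk>f \<in> cHom C X Y; X \<in> cOb C; Y \<in> cOb C\<rbrakk> \<Longrightarrow> Fm A f \<in> lHom L (Fo A X) (Fo A Y)"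
  using lnl_adjunction by (simp add: lnl_adjunction_def)

lemma Fm_ccmp:
  "\<lbrakk>f \<in> cHom C X Y; g \<in> cHom C Y Z; X \<in> cOb C; Y \<in> cOb C; Z \<in> cOb C\<rbrakk>
   \<Longrightarrow> Fm A (ccmp C f g) = lcmp L (Fm A f) (Fm A g)"
  using lnl_adjunction by (simp add: lnl_adjunction_def)

lemma mm_hom [intro]:
  "\<lbrakk>X \<in> cOb C; Y \<in> cOb C\<rbrakk> \<Longrightarrow> mm A X Y \<in> lHom L (tno L (Fo A X) (Fo A Y)) (Fo A (cprd C X Y))"
  using lnl_adjunction by (simp add: lnl_adjunction_def)

lemma mminv_hom [intro]:
  "\<lbrakk>X \<in> cOb C; Y \<in> cOb C\<rbrakk> \<Longrightarrow> mminv A X Y \<in> lHom L (Fo A (cprd C X Y)) (tno L (Fo A X) (Fo A Y))"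
  using lnl_adjunction by (simp add: lnl_adjunction_def)

lemma mm_mminv: "\<lbrakk>X \<in> cOb C; Y \<in> cOb C\<rbrakk> \<Longrightarrow> lcmp L (mm A X Y) (mminv A X Y)
  = lidn L (tno L (Fo A X) (Fo A Y))"
  using lnl_adjunction by (simp add: lnl_adjunction_def)

lemma mminv_mm: "\<lbrakk>X \<in> cOb C; Y \<in> cOb C\<rbrakk> \<Longrightarrow> lcmp L (mminv A X Y) (mm A X Y)
  = lidn L (Fo A (cprd C X Y))"
  using lnl_adjunction by (simp add: lnl_adjunction_def)

lemma m1_hom [intro]: "m1 A \<in> lHom L (tunit L) (Fo A (ctrm C))"
  using lnl_adjunction by (simp add: lnl_adjunction_def)

lemma m1inv_hom [intro]: "m1inv A \<in> lHom L (Fo A (ctrm C)) (tunit L)"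
  using lnl_adjunction by (simp add: lnl_adjunction_def)

lemma m1inv_m1: "lcmp L (m1inv A) (m1 A) = lidn L (Fo A (ctrm C))"
  using lnl_adjunction by (simp add: lnl_adjunction_def)

lemma mm_natural:
  "\<lbrakk>f \<in> cHom C X X'; g \<in> cHom C Y Y'; X \<in> cOb C; Y \<in> cOb C; X' \<in> cOb C; Y' \<in> cOb C\<rbrakk>
   \<Longrightarrow> lcmp L (tnm L (Fm A f) (Fm A g)) (mm A X' Y') = lcmp L (mm A X Y) (Fm A (cfx C X Y f g))"
  using lnl_adjunction by (simp add: lnl_adjunction_def)

lemma mm_cassoc:
  "\<lbrakk>X \<in> cOb C; Y \<in> cOb C; Z \<in> cOb C\<rbrakk> \<Longrightarrow>
   lcmp L (lcmp L (tnm L (mm A X Y) (lidn L (Fo A Z))) (mm A (cprd C X Y) Z))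
     (Fm A (cassoc C X Y Z))
   = lcmp L (tnm L (lidn L (Fo A X)) (mm A Y Z)) (mm A X (cprd C Y Z))"
  using lnl_adjunction by (simp add: lnl_adjunction_def)

lemma mm_unit:
  "X \<in> cOb C \<Longrightarrow>
   lcmp L (lcmp L (tnm L (m1 A) (lidn L (Fo A X))) (mm A (ctrm C) X)) (Fm A (cp2 C (ctrm C) X))
   = lidn L (Fo A X)"
  "X \<in> cOb C \<Longrightarrow>
   lcmp L (lcmp L (tnm L (lidn L (Fo A X)) (m1 A)) (mm A X (ctrm C))) (Fm A (cp1 C X (ctrm C)))
   = lidn L (Fo A X)"
  using lnl_adjunction by (simp_all add: lnl_adjunction_def)

lemma mminv_natural:
  assumes f: "f \<in> cHom C X X'" and g: "g \<in> cHom C Y Y'"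
    and ob: "X \<in> cOb C" "Y \<in> cOb C" "X' \<in> cOb C" "Y' \<in> cOb C"
  shows "lcmp L (Fm A (cfx C X Y f g)) (mminv A X' Y')
    = lcmp L (mminv A X Y) (tnm L (Fm A f) (Fm A g))"
  by (rule L.inverse_square[symmetric, OF _ mm_hom _ Fm_hom mminv_hom mminv_hom _ _ _ _
        mm_mminv mminv_mm mm_natural[OF f g ob]])
    (use assms in auto)

lemma mminv_unit_left:
  assumes X: "X \<in> cOb C"
  shows "lcmp L (mminv A (ctrm C) X) (tnm L (m1inv A) (lidn L (Fo A X))) = Fm A (cp2 C (ctrm C) X)"
proof -
  let ?t = "tnm L (m1inv A) (lidn L (Fo A X))" and ?t' = "tnm L (m1 A) (lidn L (Fo A X))"
  let ?s = "lcmp L (mm A (ctrm C) X) (Fm A (cp2 C (ctrm C) X))"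
  have t: "?t \<in> lHom L (tno L (Fo A (ctrm C)) (Fo A X)) (Fo A X)"
    and t': "?t' \<in> lHom L (Fo A X) (tno L (Fo A (ctrm C)) (Fo A X))"
    and pr: "Fm A (cp2 C (ctrm C) X) \<in> lHom L (Fo A (cprd C (ctrm C) X)) (Fo A X)"
    using L.tnm_hom[OF m1inv_hom L.idn_hom] L.tnm_hom[OF m1_hom L.idn_hom] X by auto
  have s: "?s \<in> lHom L (tno L (Fo A (ctrm C)) (Fo A X)) (Fo A X)"
    using L.cmp_hom[OF mm_hom pr] X by simp
  have "lcmp L ?t ?t' = lidn L (tno L (Fo A (ctrm C)) (Fo A X))"
    using L.lcmp_tnm_lidn(1)[OF m1inv_hom m1_hom] m1inv_m1 X by simp
  moreover have "lcmp L ?t' ?s = lidn L (Fo A X)"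
    using mm_unit(1)[OF X] L.cmp_assoc[OF t' mm_hom pr] X by simp
  ultimately have "?t = ?s"
    using L.left_inverse_eq_right_inverse[OF t t' s] X by simp
  then show ?thesis
    using L.cmp_assoc[OF mminv_hom mm_hom pr, symmetric] mminv_mm L.cmp_idn_left[OF pr] X by simp
qed

lemma mminv_unit_right:
  assumes X: "X \<in> cOb C"
  shows "lcmp L (mminv A X (ctrm C)) (tnm L (lidn L (Fo A X)) (m1inv A)) = Fm A (cp1 C X (ctrm C))"
proof -
  let ?t = "tnm L (lidn L (Fo A X)) (m1inv A)" and ?t' = "tnm L (lidn L (Fo A X)) (m1 A)"
  let ?s = "lcmp L (mm A X (ctrm C)) (Fm A (cp1 C X (ctrm C)))"
  have t: "?t \<in> lHom L (tno L (Fo A X) (Fo A (ctrm C))) (Fo A X)"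
    and t': "?t' \<in> lHom L (Fo A X) (tno L (Fo A X) (Fo A (ctrm C)))"
    and pr: "Fm A (cp1 C X (ctrm C)) \<in> lHom L (Fo A (cprd C X (ctrm C))) (Fo A X)"
    using L.tnm_hom[OF L.idn_hom m1inv_hom] L.tnm_hom[OF L.idn_hom m1_hom] X by auto
  have s: "?s \<in> lHom L (tno L (Fo A X) (Fo A (ctrm C))) (Fo A X)"
    using L.cmp_hom[OF mm_hom pr] X by simp
  have "lcmp L ?t ?t' = lidn L (tno L (Fo A X) (Fo A (ctrm C)))"
    using L.lcmp_tnm_lidn(2)[OF m1inv_hom m1_hom] m1inv_m1 X by simp
  moreover have "lcmp L ?t' ?s = lidn L (Fo A X)"
    using mm_unit(2)[OF X] L.cmp_assoc[OF t' mm_hom pr] X by simp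
  ultimately have "?t = ?s"
    using L.left_inverse_eq_right_inverse[OF t t' s] X by simp
  then show ?thesis
    using L.cmp_assoc[OF mminv_hom mm_hom pr, symmetric] mminv_mm L.cmp_idn_left[OF pr] X by simp
qed

lemma mminv_cassoc:
  assumes X: "X \<in> cOb C" and Y: "Y \<in> cOb C" and Z: "Z \<in> cOb C"
  shows "lcmp L (mminv A (cprd C X Y) Z) (tnm L (mminv A X Y) (lidn L (Fo A Z)))
       = lcmp L (Fm A (cassoc C X Y Z))
         (lcmp L (mminv A X (cprd C Y Z)) (tnm L (lidn L (Fo A X)) (mminv A Y Z)))"
proof -
  let ?P = "tno L (Fo A X) (tno L (Fo A Y) (Fo A Z))"
  let ?p = "lcmp L (tnm L (mm A X Y) (lidn L (Fo A Z))) (mm A (cprd C X Y) Z)"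
  let ?p' = "lcmp L (mminv A (cprd C X Y) Z) (tnm L (mminv A X Y) (lidn L (Fo A Z)))"
  let ?q = "lcmp L (tnm L (lidn L (Fo A X)) (mm A Y Z)) (mm A X (cprd C Y Z))"
  let ?q' = "lcmp L (mminv A X (cprd C Y Z)) (tnm L (lidn L (Fo A X)) (mminv A Y Z))"
  have ob: "cprd C X Y \<in> cOb C" "cprd C Y Z \<in> cOb C" "?P \<in> lOb L"
    using assms by auto
  have mXY: "tnm L (mm A X Y) (lidn L (Fo A Z)) \<in> lHom L ?P (tno L (Fo A (cprd C X Y)) (Fo A Z))"
    and mXY': "tnm L (mminv A X Y) (lidn L (Fo A Z)) \<in> lHom L (tno L (Fo A (cprd C X Y)) (Fo A Z)) ?P"
    and mYZ: "tnm L (lidn L (Fo A X)) (mm A Y Z) \<in> lHom L ?P (tno L (Fo A X) (Fo A (cprd C Y Z)))"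
    and mYZ': "tnm L (lidn L (Fo A X)) (mminv A Y Z) \<in> lHom L (tno L (Fo A X) (Fo A (cprd C Y Z))) ?P"
    using L.tnm_hom[OF mm_hom L.idn_hom] L.tnm_hom[OF mminv_hom L.idn_hom]
      L.tnm_hom[OF L.idn_hom mm_hom] L.tnm_hom[OF L.idn_hom mminv_hom] assms
    by simp_all
  have q: "?q \<in> lHom L ?P (Fo A (cprd C X (cprd C Y Z)))"
    and p': "?p' \<in> lHom L (Fo A (cprd C (cprd C X Y) Z)) ?P"
    using L.cmp_hom[OF mYZ mm_hom] L.cmp_hom[OF mminv_hom mXY'] ob assms by simp_all
  have "lcmp L ?p' ?p = lidn L (Fo A (cprd C (cprd C X Y) Z))"
    using L.cmp_inverse_cmp[OF mminv_hom mXY' mm_hom mXY] L.lcmp_tnm_lidn(1)[OF mminv_hom mm_hom]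
      mminv_mm ob assms by simp
  moreover have "lcmp L ?q ?q' = lidn L ?P"
    using L.cmp_inverse_cmp[OF mYZ mm_hom mYZ' mminv_hom] L.lcmp_tnm_lidn(2)[OF mm_hom mminv_hom]
      mm_mminv ob assms by simp
  moreover have "Fm A (cassoc C X Y Z)
      \<in> lHom L (Fo A (cprd C (cprd C X Y) Z)) (Fo A (cprd C X (cprd C Y Z)))"
    using assms unfolding cassoc_def by (intro Fm_hom) blast+
  ultimately have "lcmp L ?p' (lidn L ?P) = lcmp L (Fm A (cassoc C X Y Z)) ?q'"
    using L.inverse_square[OF L.idn_hom q L.cmp_hom[OF mXY mm_hom] _ _ p'] mm_cassoc[OF assms]
      L.cmp_hom[OF mminv_hom mYZ'] L.cmp_idn_left[OF q] ob assms
    by simp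
  then show ?thesis
    using L.cmp_idn_right[OF p'] ob assms by simp
qed

lemma cX_hom [intro]: "X \<in> cOb C \<Longrightarrow> cX C L A X \<in> lHom L (Fo A X) (tno L (Fo A X) (Fo A X))"
  unfolding cX_def by blast

lemma wX_hom [intro]: "X \<in> cOb C \<Longrightarrow> wX C L A X \<in> lHom L (Fo A X) (tunit L)"
  unfolding wX_def by blast

lemma tnm_cX_lidn_hom [intro]:
  "\<lbrakk>X \<in> cOb C; P \<in> lOb L\<rbrakk>
   \<Longrightarrow> tnm L (cX C L A X) (lidn L P) \<in> lHom L (tno L (Fo A X) P) (tno L (Fo A X) (tno L (Fo A X) P))"
  using L.tnm_hom[OF cX_hom L.idn_hom] by simp

lemma tnm_wX_lidn_hom [intro]:
  "\<lbrakk>X \<in> cOb C; P \<in> lOb L\<rbrakk> \<Longrightarrow> tnm L (wX C L A X) (lidn L P) \<in> lHom L (tno L (Fo A X) P) P"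
  using L.tnm_hom[OF wX_hom L.idn_hom] by simp

lemma wX_natural:
  assumes h: "h \<in> cHom C X Y" and X: "X \<in> cOb C" and Y: "Y \<in> cOb C"
  shows "lcmp L (Fm A h) (wX C L A Y) = wX C L A X"
proof -
  have "ccmp C h (cbang C Y) = cbang C X"
    using C.cbang_unique[OF X C.cmp_hom[OF h C.cbang_hom]] X Y by simp
  then show ?thesis
    unfolding wX_def
    using L.cmp_assoc[OF Fm_hom[OF h] Fm_hom[OF C.cbang_hom] m1inv_hom] Fm_ccmp[OF h C.cbang_hom] X Y
    by simp
qed

lemma cX_tnm_Fm:
  assumes f: "f \<in> cHom C X Y" and g: "g \<in> cHom C X Z" and ob: "X \<in> cOb C" "Y \<in> cOb C" "Z \<in> cOb C"
  shows "lcmp L (cX C L A X) (tnm L (Fm A f) (Fm A g)) = lcmp L (Fm A (cpair C f g)) (mminv A Y Z)"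
proof -
  have fg: "cfx C X X f g \<in> cHom C (cprd C X X) (cprd C Y Z)"
    using assms by blast
  have "lcmp L (cX C L A X) (tnm L (Fm A f) (Fm A g))
      = lcmp L (Fm A (C.diag X)) (lcmp L (mminv A X X) (tnm L (Fm A f) (Fm A g)))"
    unfolding cX_def
    using L.cmp_assoc[OF Fm_hom[OF C.diag_hom] mminv_hom L.tnm_hom[OF Fm_hom[OF f] Fm_hom[OF g]]] assms
    by simp
  also have "\<dots> = lcmp L (Fm A (ccmp C (C.diag X) (cfx C X X f g))) (mminv A Y Z)"
    using mminv_natural[OF f g] L.cmp_assoc[OF Fm_hom[OF C.diag_hom] Fm_hom[OF fg] mminv_hom]
      Fm_ccmp[OF C.diag_hom fg] assms by simp
  finally show ?thesis
    using C.diag_cfx[OF f g] assms by simp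
qed

lemma cX_natural:
  assumes h: "h \<in> cHom C X Y" and X: "X \<in> cOb C" and Y: "Y \<in> cOb C"
  shows "lcmp L (Fm A h) (cX C L A Y) = lcmp L (cX C L A X) (tnm L (Fm A h) (Fm A h))"
proof -
  have "ccmp C h (C.diag Y) = cpair C h h"
    using C.ccmp_cpair[OF h C.idn_hom C.idn_hom] C.cmp_idn_right[OF h] X Y by simp
  then have "lcmp L (Fm A h) (cX C L A Y) = lcmp L (Fm A (cpair C h h)) (mminv A Y Y)"
    unfolding cX_def
    using L.cmp_assoc[OF Fm_hom[OF h] Fm_hom[OF C.diag_hom] mminv_hom] Fm_ccmp[OF h C.diag_hom] X Y
    by simp
  then show ?thesis
    using cX_tnm_Fm[OF h h] X Y by simp
qed

lemma cX_counit_left: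
  assumes X: "X \<in> cOb C"
  shows "lcmp L (cX C L A X) (tnm L (wX C L A X) (lidn L (Fo A X))) = lidn L (Fo A X)"
proof -
  have b: "cbang C X \<in> cHom C X (ctrm C)"
    and bX: "cpair C (cbang C X) (cidn C X) \<in> cHom C X (cprd C (ctrm C) X)"
    using X by blast+
  have "tnm L (wX C L A X) (lidn L (Fo A X))
      = lcmp L (tnm L (Fm A (cbang C X)) (Fm A (cidn C X))) (tnm L (m1inv A) (lidn L (Fo A X)))"
    unfolding wX_def using L.tnm_lcmp[OF Fm_hom[OF b] m1inv_hom L.idn_hom L.idn_hom] X by simp
  then have "lcmp L (cX C L A X) (tnm L (wX C L A X) (lidn L (Fo A X)))
      = lcmp L (Fm A (cpair C (cbang C X) (cidn C X))) (Fm A (cp2 C (ctrm C) X))"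
    using L.cmp_assoc[OF cX_hom L.tnm_hom[OF Fm_hom[OF b] Fm_hom[OF C.idn_hom]]
        L.tnm_hom[OF m1inv_hom L.idn_hom]]
      L.cmp_assoc[OF Fm_hom[OF bX] mminv_hom L.tnm_hom[OF m1inv_hom L.idn_hom]]
      cX_tnm_Fm[OF b C.idn_hom] mminv_unit_left X
    by simp
  also have "\<dots> = lidn L (Fo A X)"
    using Fm_ccmp[OF bX C.cp2_hom] C.cpair_cp2[OF b C.idn_hom] X by simp
  finally show ?thesis .
qed

lemma cX_counit_right:
  assumes X: "X \<in> cOb C"
  shows "lcmp L (cX C L A X) (tnm L (lidn L (Fo A X)) (wX C L A X)) = lidn L (Fo A X)"
proof -
  have b: "cbang C X \<in> cHom C X (ctrm C)"
    and Xb: "cpair C (cidn C X) (cbang C X) \<in> cHom C X (cprd C X (ctrm C))"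
    using X by blast+
  have "tnm L (lidn L (Fo A X)) (wX C L A X)
      = lcmp L (tnm L (Fm A (cidn C X)) (Fm A (cbang C X))) (tnm L (lidn L (Fo A X)) (m1inv A))"
    unfolding wX_def using L.tnm_lcmp[OF L.idn_hom L.idn_hom Fm_hom[OF b] m1inv_hom] X by simp
  then have "lcmp L (cX C L A X) (tnm L (lidn L (Fo A X)) (wX C L A X))
      = lcmp L (Fm A (cpair C (cidn C X) (cbang C X))) (Fm A (cp1 C X (ctrm C)))"
    using L.cmp_assoc[OF cX_hom L.tnm_hom[OF Fm_hom[OF C.idn_hom] Fm_hom[OF b]]
        L.tnm_hom[OF L.idn_hom m1inv_hom]]
      L.cmp_assoc[OF Fm_hom[OF Xb] mminv_hom L.tnm_hom[OF L.idn_hom m1inv_hom]]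
      cX_tnm_Fm[OF C.idn_hom b] mminv_unit_right X
    by simp
  also have "\<dots> = lidn L (Fo A X)"
    using Fm_ccmp[OF Xb C.cp1_hom] C.cpair_cp1[OF C.idn_hom b] X by simp
  finally show ?thesis .
qed

lemma cX_coassoc:
  assumes X: "X \<in> cOb C"
  shows "lcmp L (cX C L A X) (tnm L (cX C L A X) (lidn L (Fo A X)))
       = lcmp L (cX C L A X) (tnm L (lidn L (Fo A X)) (cX C L A X))"
proof -
  let ?q' = "lcmp L (mminv A X (cprd C X X)) (tnm L (lidn L (Fo A X)) (mminv A X X))"
  have ob: "cprd C X X \<in> cOb C" "Fo A X \<in> lOb L"
    using X by auto
  have D: "C.diag X \<in> cHom C X (cprd C X X)" and i: "cidn C X \<in> cHom C X X"
    and Di: "cpair C (C.diag X) (cidn C X) \<in> cHom C X (cprd C (cprd C X X) X)"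
    and iD: "cpair C (cidn C X) (C.diag X) \<in> cHom C X (cprd C X (cprd C X X))"
    and a: "cassoc C X X X \<in> cHom C (cprd C (cprd C X X) X) (cprd C X (cprd C X X))"
    using X unfolding cassoc_def by blast+
  have mX: "tnm L (mminv A X X) (lidn L (Fo A X))
      \<in> lHom L (tno L (Fo A (cprd C X X)) (Fo A X)) (tno L (Fo A X) (tno L (Fo A X) (Fo A X)))"
    and Xm: "tnm L (lidn L (Fo A X)) (mminv A X X)
      \<in> lHom L (tno L (Fo A X) (Fo A (cprd C X X))) (tno L (Fo A X) (tno L (Fo A X) (Fo A X)))"
    using L.tnm_hom[OF mminv_hom L.idn_hom] L.tnm_hom[OF L.idn_hom mminv_hom] X ob by simp_all
  have q': "?q' \<in> lHom L (Fo A (cprd C X (cprd C X X))) (tno L (Fo A X) (tno L (Fo A X) (Fo A X)))"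
    using L.cmp_hom[OF mminv_hom Xm] X ob by simp
  have "tnm L (cX C L A X) (lidn L (Fo A X))
      = lcmp L (tnm L (Fm A (C.diag X)) (Fm A (cidn C X))) (tnm L (mminv A X X) (lidn L (Fo A X)))"
    unfolding cX_def using L.tnm_lcmp[OF Fm_hom[OF D] mminv_hom L.idn_hom L.idn_hom] X ob by simp
  then have "lcmp L (cX C L A X) (tnm L (cX C L A X) (lidn L (Fo A X)))
      = lcmp L (Fm A (cpair C (C.diag X) (cidn C X)))
        (lcmp L (mminv A (cprd C X X) X) (tnm L (mminv A X X) (lidn L (Fo A X))))"
    using L.cmp_assoc[OF cX_hom L.tnm_hom[OF Fm_hom[OF D] Fm_hom[OF i]] mX] cX_tnm_Fm[OF D i]
      L.cmp_assoc[OF Fm_hom[OF Di] mminv_hom mX] X ob by simp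
  also have "\<dots> = lcmp L (Fm A (cpair C (cidn C X) (C.diag X))) ?q'"
    using mminv_cassoc[OF X X X] L.cmp_assoc[OF Fm_hom[OF Di] Fm_hom[OF a] q', symmetric]
      Fm_ccmp[OF Di a] C.cpair_cassoc[OF i i i] X ob by simp
  also have "\<dots> = lcmp L (cX C L A X) (tnm L (lidn L (Fo A X)) (cX C L A X))"
  proof -
    have "tnm L (lidn L (Fo A X)) (cX C L A X)
        = lcmp L (tnm L (Fm A (cidn C X)) (Fm A (C.diag X)))
          (tnm L (lidn L (Fo A X)) (mminv A X X))"
      unfolding cX_def using L.tnm_lcmp[OF L.idn_hom L.idn_hom Fm_hom[OF D] mminv_hom] X ob by simp
    then show ?thesis
      using L.cmp_assoc[OF cX_hom L.tnm_hom[OF Fm_hom[OF i] Fm_hom[OF D]] Xm] cX_tnm_Fm[OF i D]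
        L.cmp_assoc[OF Fm_hom[OF iD] mminv_hom Xm] X ob by simp
  qed
  finally show ?thesis .
qed

lemma ls_hom_pair_iff [simp]:
  "(f, u) \<in> ls_hom C L A (X, P) (Y, Q) \<longleftrightarrow> f \<in> cHom C X Y \<and> u \<in> lHom L (tno L (Fo A X) P) Q"
  by (simp add: ls_hom_def)

lemma ls_comp_id_left:
  assumes g: "g \<in> cHom C X Y" and v: "v \<in> lHom L (tno L (Fo A X) P) Q"
    and ob: "X \<in> cOb C" "Y \<in> cOb C" "P \<in> lOb L" "Q \<in> lOb L"
  shows "ls_comp C L A X P (ls_id C L A X P) (g, v) = (g, v)"
proof -
  have w: "tnm L (lidn L (Fo A X)) (wX C L A X) \<in> lHom L (tno L (Fo A X) (Fo A X)) (Fo A X)"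
    using L.tnm_hom[OF L.idn_hom wX_hom] ob by simp
  have "tnm L (Fm A (cidn C X)) (tnm L (wX C L A X) (lidn L P))
      = tnm L (tnm L (lidn L (Fo A X)) (wX C L A X)) (lidn L P)"
    using L.tnm_assoc[OF L.idn_hom wX_hom L.idn_hom] ob by simp
  moreover have "lcmp L (tnm L (cX C L A X) (lidn L P))
        (tnm L (tnm L (lidn L (Fo A X)) (wX C L A X)) (lidn L P))
      = lidn L (tno L (Fo A X) P)"
    using L.lcmp_tnm_lidn(1)[OF cX_hom w] cX_counit_right ob by simp
  ultimately show ?thesis
    unfolding ls_comp_def ls_id_def using C.cmp_idn_left[OF g] L.cmp_idn_left[OF v] ob by simp
qed

lemma ls_comp_id_right:
  assumes f: "f \<in> cHom C X Y" and u: "u \<in> lHom L (tno L (Fo A X) P) Q"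
    and ob: "X \<in> cOb C" "Y \<in> cOb C" "P \<in> lOb L" "Q \<in> lOb L"
  shows "ls_comp C L A X P (f, u) (ls_id C L A Y Q) = (f, u)"
proof -
  have w: "tnm L (wX C L A X) (lidn L (Fo A X)) \<in> lHom L (tno L (Fo A X) (Fo A X)) (Fo A X)"
    using L.tnm_hom[OF wX_hom L.idn_hom] ob by simp
  have wP: "tnm L (tnm L (wX C L A X) (lidn L (Fo A X))) (lidn L P)
      \<in> lHom L (tno L (Fo A X) (tno L (Fo A X) P)) (tno L (Fo A X) P)"
    using L.tnm_hom[OF w L.idn_hom] ob by simp
  have "lcmp L (tnm L (Fm A f) u) (tnm L (wX C L A Y) (lidn L Q)) = tnm L (wX C L A X) u"
    using L.tnm_lcmp[OF Fm_hom[OF f] wX_hom u L.idn_hom] wX_natural[OF f]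
      L.cmp_idn_right[OF u] ob by simp
  also have "\<dots> = lcmp L (tnm L (tnm L (wX C L A X) (lidn L (Fo A X))) (lidn L P)) u"
    using L.tnm_lcmp[OF wX_hom L.idn_hom L.idn_hom u] L.cmp_idn_right[OF wX_hom]
      L.cmp_idn_left[OF u] L.tnm_tunit_lidn[OF u] L.tnm_assoc[OF wX_hom L.idn_hom L.idn_hom] ob by simp
  finally have "lcmp L (tnm L (Fm A f) u) (tnm L (wX C L A Y) (lidn L Q))
      = lcmp L (tnm L (tnm L (wX C L A X) (lidn L (Fo A X))) (lidn L P)) u" .
  moreover have "lcmp L (tnm L (cX C L A X) (lidn L P))
        (tnm L (tnm L (wX C L A X) (lidn L (Fo A X))) (lidn L P))
      = lidn L (tno L (Fo A X) P)"
    using L.lcmp_tnm_lidn(1)[OF cX_hom w] cX_counit_left ob by simp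
  ultimately show ?thesis
    unfolding ls_comp_def ls_id_def
    using L.cmp_assoc[OF tnm_cX_lidn_hom L.tnm_hom[OF Fm_hom[OF f] u] tnm_wX_lidn_hom]
      L.cmp_assoc[OF tnm_cX_lidn_hom wP u, symmetric] L.cmp_idn_left[OF u] C.cmp_idn_right[OF f] ob
    by simp
qed

lemma tnm_cX_natural:
  assumes f: "f \<in> cHom C X Y" and u: "u \<in> lHom L P Q"
    and ob: "X \<in> cOb C" "Y \<in> cOb C" "P \<in> lOb L" "Q \<in> lOb L"
  shows "lcmp L (tnm L (Fm A f) u) (tnm L (cX C L A Y) (lidn L Q))
       = lcmp L (tnm L (cX C L A X) (lidn L P)) (tnm L (tnm L (Fm A f) (Fm A f)) u)"
proof -
  have "lcmp L (tnm L (Fm A f) u) (tnm L (cX C L A Y) (lidn L Q))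
      = tnm L (lcmp L (cX C L A X) (tnm L (Fm A f) (Fm A f))) (lcmp L (lidn L P) u)"
    using L.tnm_lcmp[OF Fm_hom[OF f] cX_hom u L.idn_hom] cX_natural[OF f] L.cmp_idn_right[OF u]
      L.cmp_idn_left[OF u] ob by simp
  also have "\<dots> = lcmp L (tnm L (cX C L A X) (lidn L P)) (tnm L (tnm L (Fm A f) (Fm A f)) u)"
    using L.tnm_lcmp[OF cX_hom L.tnm_hom[OF Fm_hom[OF f] Fm_hom[OF f]] L.idn_hom u] ob by simp
  finally show ?thesis .
qed

lemma tnm_cX_coassoc:
  assumes X: "X \<in> cOb C" and P: "P \<in> lOb L"
  shows "lcmp L (tnm L (cX C L A X) (lidn L P)) (tnm L (lidn L (Fo A X)) (tnm L (cX C L A X) (lidn L P)))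
       = lcmp L (tnm L (cX C L A X) (lidn L P)) (tnm L (cX C L A X) (lidn L (tno L (Fo A X) P)))"
proof -
  have c: "tnm L (lidn L (Fo A X)) (cX C L A X)
      \<in> lHom L (tno L (Fo A X) (Fo A X)) (tno L (Fo A X) (tno L (Fo A X) (Fo A X)))"
    and c': "tnm L (cX C L A X) (lidn L (Fo A X))
      \<in> lHom L (tno L (Fo A X) (Fo A X)) (tno L (Fo A X) (tno L (Fo A X) (Fo A X)))"
    using L.tnm_hom[OF L.idn_hom cX_hom] L.tnm_hom[OF cX_hom L.idn_hom] X by simp_all
  have "tnm L (lidn L (Fo A X)) (tnm L (cX C L A X) (lidn L P))
      = tnm L (tnm L (lidn L (Fo A X)) (cX C L A X)) (lidn L P)"
    and "tnm L (cX C L A X) (lidn L (tno L (Fo A X) P))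
      = tnm L (tnm L (cX C L A X) (lidn L (Fo A X))) (lidn L P)"
    using L.tnm_assoc[OF L.idn_hom cX_hom L.idn_hom] L.tnm_assoc[OF cX_hom L.idn_hom L.idn_hom]
      X P by simp_all
  then show ?thesis
    using L.lcmp_tnm_lidn(1)[OF cX_hom c] L.lcmp_tnm_lidn(1)[OF cX_hom c'] cX_coassoc X P by simp
qed

lemma ls_comp_assoc:
  assumes f: "f \<in> cHom C X Y" and u: "u \<in> lHom L (tno L (Fo A X) P) Q"
    and g: "g \<in> cHom C Y Z" and v: "v \<in> lHom L (tno L (Fo A Y) Q) R"
    and h: "h \<in> cHom C Z W" and w: "w \<in> lHom L (tno L (Fo A Z) R) S"
    and ob: "X \<in> cOb C" "Y \<in> cOb C" "Z \<in> cOb C" "W \<in> cOb C" "P \<in> lOb L" "Q \<in> lOb L"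
      "R \<in> lOb L" "S \<in> lOb L"
  shows "ls_comp C L A X P (ls_comp C L A X P (f, u) (g, v)) (h, w)
       = ls_comp C L A X P (f, u) (ls_comp C L A Y Q (g, v) (h, w))"
proof -
  let ?FX = "Fo A X" and ?cP = "tnm L (cX C L A X) (lidn L P)"
  let ?cFP = "tnm L (cX C L A X) (lidn L (tno L (Fo A X) P))"
  let ?fu = "tnm L (Fm A f) u" and ?V = "lcmp L (tnm L (Fm A f) u) v" and ?Ffg = "Fm A (ccmp C f g)"
  let ?common = "lcmp L (lcmp L ?cP ?cFP) (lcmp L (tnm L ?Ffg ?V) w)"
  have cP: "?cP \<in> lHom L (tno L ?FX P) (tno L ?FX (tno L ?FX P))"
    and cFP: "?cFP \<in> lHom L (tno L ?FX (tno L ?FX P)) (tno L ?FX (tno L ?FX (tno L ?FX P)))"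
    and fu: "?fu \<in> lHom L (tno L ?FX (tno L ?FX P)) (tno L (Fo A Y) Q)"
    and V: "?V \<in> lHom L (tno L ?FX (tno L ?FX P)) R"
    and Ffg: "?Ffg \<in> lHom L ?FX (Fo A Z)"
    and gv: "tnm L (Fm A g) v \<in> lHom L (tno L (Fo A Y) (tno L (Fo A Y) Q)) (tno L (Fo A Z) R)"
    using assms L.tnm_hom[OF Fm_hom[OF f] u] L.tnm_hom[OF Fm_hom[OF g] v] by (auto intro!: L.cmp_hom)
  have ffu: "tnm L (tnm L (Fm A f) (Fm A f)) u
      \<in> lHom L (tno L ?FX (tno L ?FX (tno L ?FX P))) (tno L (Fo A Y) (tno L (Fo A Y) Q))"
    and FfgV: "tnm L ?Ffg ?V \<in> lHom L (tno L ?FX (tno L ?FX (tno L ?FX P))) (tno L (Fo A Z) R)"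
    using L.tnm_hom[OF L.tnm_hom[OF Fm_hom[OF f] Fm_hom[OF f]] u] L.tnm_hom[OF Ffg V] ob by simp_all
  have lhs: "snd (ls_comp C L A X P (ls_comp C L A X P (f, u) (g, v)) (h, w)) = ?common"
  proof -
    have "tnm L ?Ffg (lcmp L ?cP ?V) = lcmp L (tnm L (lidn L ?FX) ?cP) (tnm L ?Ffg ?V)"
      using L.tnm_lcmp[OF L.idn_hom Ffg cP V] L.cmp_idn_left[OF Ffg] ob by simp
    then show ?thesis
      unfolding ls_comp_def fst_conv snd_conv
      using L.cmp_assoc[OF cP fu v] L.cmp_assoc[OF cP L.tnm_hom[OF L.idn_hom cP] FfgV, symmetric]
        tnm_cX_coassoc L.cmp_assoc[OF L.cmp_hom[OF cP cFP] FfgV w] L.cmp_assoc[OF cP cFP FfgV] ob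
      by simp
  qed
  have rhs: "snd (ls_comp C L A X P (f, u) (ls_comp C L A Y Q (g, v) (h, w))) = ?common"
  proof -
    have "lcmp L (tnm L (tnm L (Fm A f) (Fm A f)) u) (tnm L (Fm A g) v) = tnm L ?Ffg ?V"
      using L.tnm_assoc[OF Fm_hom[OF f] Fm_hom[OF f] u] L.tnm_lcmp[OF Fm_hom[OF f] Fm_hom[OF g] fu v]
        Fm_ccmp[OF f g] ob by simp
    then show ?thesis
      unfolding ls_comp_def fst_conv snd_conv
      using tnm_cX_natural[OF f u] L.cmp_assoc[OF fu tnm_cX_lidn_hom L.cmp_hom[OF gv w], symmetric]
        L.cmp_assoc[OF tnm_cX_lidn_hom gv w] L.cmp_assoc[OF cFP ffu L.cmp_hom[OF gv w]]
        L.cmp_assoc[OF ffu gv w, symmetric] L.cmp_assoc[OF cP fu L.cmp_hom[OF L.cmp_hom[OF tnm_cX_lidn_hom gv] w]]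
        L.cmp_assoc[OF cP cFP L.cmp_hom[OF FfgV w]] ob
      by simp
  qed
  show ?thesis
    using lhs rhs C.cmp_assoc[OF f g h] ob by (simp add: ls_comp_def)
qed

lemma ls_inverse_unique:
  assumes "ls_is_inverse C L A (X, P) (Y, Q) h k" "ls_is_inverse C L A (X, P) (Y, Q) h k'"
    and ob: "X \<in> cOb C" "Y \<in> cOb C" "P \<in> lOb L" "Q \<in> lOb L"
  shows "k = k'"
proof -
  obtain h1 h2 k1 k2 k1' k2' where hk: "h = (h1, h2)" "k = (k1, k2)" "k' = (k1', k2')"
    by (cases h, cases k, cases k') simp
  have h: "h1 \<in> cHom C X Y" "h2 \<in> lHom L (tno L (Fo A X) P) Q"
    and k: "k1 \<in> cHom C Y X" "k2 \<in> lHom L (tno L (Fo A Y) Q) P"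
    and k': "k1' \<in> cHom C Y X" "k2' \<in> lHom L (tno L (Fo A Y) Q) P"
    and kh: "ls_comp C L A Y Q (k1, k2) (h1, h2) = ls_id C L A Y Q"
    and hk': "ls_comp C L A X P (h1, h2) (k1', k2') = ls_id C L A X P"
    using assms by (auto simp: ls_is_inverse_def hk)
  have "(k1, k2) = ls_comp C L A Y Q (k1, k2) (ls_comp C L A X P (h1, h2) (k1', k2'))"
    using ls_comp_id_right[OF k] hk' ob by simp
  also have "\<dots> = (k1', k2')"
    using ls_comp_assoc[OF k h k'] kh ls_comp_id_left[OF k'] ob by (simp add: ls_id_def)
  finally show ?thesis
    by (simp add: hk)
qed

lemma ls_comp_inverse_cancel:
  assumes "ls_is_inverse C L A (Y, Q) (Y', Q') h k"
    and f: "f \<in> cHom C X Y" and u: "u \<in> lHom L (tno L (Fo A X) P) Q"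
    and ob: "X \<in> cOb C" "Y \<in> cOb C" "Y' \<in> cOb C" "P \<in> lOb L" "Q \<in> lOb L" "Q' \<in> lOb L"
  shows "ls_comp C L A X P (ls_comp C L A X P (f, u) h) k = (f, u)"
proof -
  obtain h1 h2 k1 k2 where hk: "h = (h1, h2)" "k = (k1, k2)"
    by (cases h, cases k) simp
  have h: "h1 \<in> cHom C Y Y'" "h2 \<in> lHom L (tno L (Fo A Y) Q) Q'"
    and k: "k1 \<in> cHom C Y' Y" "k2 \<in> lHom L (tno L (Fo A Y') Q') Q"
    and hk_id: "ls_comp C L A Y Q (h1, h2) (k1, k2) = ls_id C L A Y Q"
    using assms by (auto simp: ls_is_inverse_def hk)
  show ?thesis
    using ls_comp_assoc[OF f u h k] hk_id ls_comp_id_right[OF f u] ob by (simp add: hk)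
qed

lemma ls_comp_reindex:
  assumes h: "h \<in> cHom C X Y" and u: "u \<in> lHom L (tno L (Fo A X) P) Q"
    and v: "v \<in> lHom L (tno L (Fo A Y) Q) R"
    and ob: "X \<in> cOb C" "Y \<in> cOb C" "P \<in> lOb L" "Q \<in> lOb L" "R \<in> lOb L"
  shows "ls_comp C L A X P (cidn C X, u) (reindex C L A X h Q (g, v))
       = (cidn C X, snd (ls_comp C L A X P (h, u) (g, v)))"
proof -
  have Fh: "Fm A h \<in> lHom L (Fo A X) (Fo A Y)"
    using h ob by blast
  have "lcmp L (tnm L (lidn L (Fo A X)) u) (tnm L (Fm A h) (lidn L Q)) = tnm L (Fm A h) u"
    using L.tnm_lcmp[OF L.idn_hom Fh u L.idn_hom] L.cmp_idn_left[OF Fh]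
      L.cmp_idn_right[OF u] ob by simp
  then show ?thesis
    unfolding ls_comp_def reindex_def fst_conv snd_conv
    using L.cmp_assoc[OF tnm_cX_lidn_hom L.tnm_hom[OF L.idn_hom u]
      L.cmp_hom[OF L.tnm_hom[OF Fh L.idn_hom] v]]
      L.cmp_assoc[OF L.tnm_hom[OF L.idn_hom u] L.tnm_hom[OF Fh L.idn_hom] v, symmetric]
      L.cmp_assoc[OF tnm_cX_lidn_hom L.tnm_hom[OF Fh u] v] C.cmp_idn_left ob by simp
qed

end

locale ls_biproducts = lnl_model +
  assumes biproducts: "has_biproducts L"
begin

lemma bpo_ob [simp, intro]: "\<lbrakk>P \<in> lOb L; Q \<in> lOb L\<rbrakk> \<Longrightarrow> bpo L P Q \<in> lOb L"
  using biproducts by (simp add: has_biproducts_def)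

lemma lpair_hom [intro]:
  "\<lbrakk>u \<in> lHom L W P; v \<in> lHom L W Q; W \<in> lOb L; P \<in> lOb L; Q \<in> lOb L\<rbrakk>
   \<Longrightarrow> lpair L u v \<in> lHom L W (bpo L P Q)"
  using biproducts by (simp add: has_biproducts_def)

lemma lpj_hom [intro]:
  "\<lbrakk>P \<in> lOb L; Q \<in> lOb L\<rbrakk> \<Longrightarrow> lpj1 L P Q \<in> lHom L (bpo L P Q) P"
  "\<lbrakk>P \<in> lOb L; Q \<in> lOb L\<rbrakk> \<Longrightarrow> lpj2 L P Q \<in> lHom L (bpo L P Q) Q"
  using biproducts by (simp_all add: has_biproducts_def)

lemma lpair_lpj:
  "\<lbrakk>u \<in> lHom L W P; v \<in> lHom L W Q; W \<in> lOb L; P \<in> lOb L; Q \<in> lOb L\<rbrakk>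
   \<Longrightarrow> lcmp L (lpair L u v) (lpj1 L P Q) = u"
  "\<lbrakk>u \<in> lHom L W P; v \<in> lHom L W Q; W \<in> lOb L; P \<in> lOb L; Q \<in> lOb L\<rbrakk>
   \<Longrightarrow> lcmp L (lpair L u v) (lpj2 L P Q) = v"
  using biproducts by (simp_all add: has_biproducts_def)

lemma lpair_unique:
  assumes "k \<in> lHom L W (bpo L P Q)" "W \<in> lOb L" "P \<in> lOb L" "Q \<in> lOb L"
  shows "k = lpair L (lcmp L k (lpj1 L P Q)) (lcmp L k (lpj2 L P Q))"
proof -
  have "lcmp L k (lpj1 L P Q) \<in> lHom L W P" "lcmp L k (lpj2 L P Q) \<in> lHom L W Q"
    using assms by auto
  then show ?thesis
    using biproducts assms by (simp add: has_biproducts_def)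
qed

lemma lcmp_lpair:
  assumes k: "k \<in> lHom L V W" and u: "u \<in> lHom L W P" and v: "v \<in> lHom L W Q"
    and ob: "V \<in> lOb L" "W \<in> lOb L" "P \<in> lOb L" "Q \<in> lOb L"
  shows "lcmp L k (lpair L u v) = lpair L (lcmp L k u) (lcmp L k v)"
proof -
  have kuv: "lcmp L k (lpair L u v) \<in> lHom L V (bpo L P Q)"
    using assms by blast
  show ?thesis
    using lpair_unique[OF kuv] L.cmp_assoc[OF k lpair_hom[OF u v] lpj_hom(1)]
      L.cmp_assoc[OF k lpair_hom[OF u v] lpj_hom(2)]
      lpair_lpj[OF u v] ob by simp
qed

lemma ls_comp_ls_pair:
  assumes f: "f \<in> cHom C X Y" and u: "u \<in> lHom L (tno L (Fo A X) P) Q"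
    and g1: "g1 \<in> cHom C Y Z1" and v1: "v1 \<in> lHom L (tno L (Fo A Y) Q) R1"
    and g2: "g2 \<in> cHom C Y Z2" and v2: "v2 \<in> lHom L (tno L (Fo A Y) Q) R2"
    and ob: "X \<in> cOb C" "Y \<in> cOb C" "Z1 \<in> cOb C" "Z2 \<in> cOb C" "P \<in> lOb L" "Q \<in> lOb L"
      "R1 \<in> lOb L" "R2 \<in> lOb L"
  shows "ls_comp C L A X P (f, u) (ls_pair C L (g1, v1) (g2, v2))
       = ls_pair C L (ls_comp C L A X P (f, u) (g1, v1)) (ls_comp C L A X P (f, u) (g2, v2))"
proof -
  have "lcmp L (tnm L (cX C L A X) (lidn L P)) (tnm L (Fm A f) u)
      \<in> lHom L (tno L (Fo A X) P) (tno L (Fo A Y) Q)"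
    using L.cmp_hom[OF tnm_cX_lidn_hom L.tnm_hom[OF Fm_hom[OF f] u]] ob by simp
  then show ?thesis
    unfolding ls_comp_def ls_pair_def fst_conv snd_conv
    using C.ccmp_cpair[OF f g1 g2] lcmp_lpair[OF _ v1 v2] ob by simp
qed

end

locale gdsc_model =
  fixes C :: "('a, 'f) cartcat" and L :: "('o, 'm) addsmc" and A :: "('a, 'f, 'o, 'm) lnl"
    and T :: "('a, 'f, 'o, 'm) tfun"
  assumes gdsc: "gdsc C L A T"

sublocale gdsc_model \<subseteq> ls_biproducts C L A
  using gdsc by unfold_locales (simp_all add: gdsc_def)

context gdsc_model
begin

lemma Tl_ob [simp, intro]: "X \<in> cOb C \<Longrightarrow> Tl T X \<in> lOb L"
  using gdsc by (simp add: gdsc_def)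

lemma Tm_hom [intro]:
  "\<lbrakk>f \<in> cHom C X Y; X \<in> cOb C; Y \<in> cOb C\<rbrakk> \<Longrightarrow> Tm T f \<in> lHom L (tno L (Fo A X) (Tl T X)) (Tl T Y)"
  using gdsc by (simp add: gdsc_def Tmor_def)

lemma Tmor_ccmp:
  "\<lbrakk>f \<in> cHom C X Y; g \<in> cHom C Y Z; X \<in> cOb C; Y \<in> cOb C; Z \<in> cOb C\<rbrakk>
   \<Longrightarrow> Tmor T (ccmp C f g) = ls_comp C L A X (Tl T X) (Tmor T f) (Tmor T g)"
  using gdsc by (simp add: gdsc_def)

lemma phi_inv_inverse:
  assumes "Y \<in> cOb C" "Z \<in> cOb C"
  shows "ls_is_inverse C L A (cprd C Y Z, Tl T (cprd C Y Z)) (cprd C Y Z, bpo L (Tl T Y) (Tl T Z))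
           (phi C L T Y Z) (phi_inv C L A T Y Z)"
proof -
  obtain k where "ls_is_inverse C L A (cprd C Y Z, Tl T (cprd C Y Z)) (cprd C Y Z, bpo L (Tl T Y) (Tl T Z))
      (phi C L T Y Z) k"
    using gdsc assms unfolding gdsc_def by blast
  then show ?thesis
    unfolding phi_inv_def ls_inv_def using ls_inverse_unique assms by (blast intro: theI)
qed

lemma Tmor_cpair_phi:
  assumes f: "f \<in> cHom C X Y" and g: "g \<in> cHom C X Z" and ob: "X \<in> cOb C" "Y \<in> cOb C" "Z \<in> cOb C"
  shows "ls_comp C L A X (Tl T X) (Tmor T (cpair C f g)) (phi C L T Y Z)
       = ls_pair C L (Tmor T f) (Tmor T g)"
proof -
  have fg: "cpair C f g \<in> cHom C X (cprd C Y Z)"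
    using assms by blast
  have "ls_comp C L A X (Tl T X) (Tmor T (cpair C f g)) (Tmor T (cp1 C Y Z)) = Tmor T f"
    and "ls_comp C L A X (Tl T X) (Tmor T (cpair C f g)) (Tmor T (cp2 C Y Z)) = Tmor T g"
    using Tmor_ccmp[OF fg C.cp1_hom] Tmor_ccmp[OF fg C.cp2_hom] C.cpair_cp1[OF f g]
      C.cpair_cp2[OF f g] ob
    by simp_all
  then show ?thesis
    unfolding phi_def Tmor_def
    using ls_comp_ls_pair[OF fg Tm_hom[OF fg] C.cp1_hom Tm_hom[OF C.cp1_hom] C.cp2_hom Tm_hom[OF C.cp2_hom]]
      ob
    by simp
qed

lemma Tmor_cpair:
  assumes f: "f \<in> cHom C X Y" and g: "g \<in> cHom C X Z" and ob: "X \<in> cOb C" "Y \<in> cOb C" "Z \<in> cOb C"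
  shows "Tmor T (cpair C f g)
       = ls_comp C L A X (Tl T X) (cpair C f g, lpair L (Tm T f) (Tm T g)) (phi_inv C L A T Y Z)"
proof -
  have fg: "cpair C f g \<in> cHom C X (cprd C Y Z)"
    using assms by blast
  have "Tmor T (cpair C f g)
      = ls_comp C L A X (Tl T X) (ls_comp C L A X (Tl T X) (Tmor T (cpair C f g)) (phi C L T Y Z))
          (phi_inv C L A T Y Z)"
    using ls_comp_inverse_cancel[OF phi_inv_inverse[OF ob(2,3)] fg Tm_hom[OF fg]] ob
    by (simp add: Tmor_def)
  then show ?thesis
    using Tmor_cpair_phi[OF assms] by (simp add: Tmor_def ls_pair_def)
qed

end

theorem proposition4p14:
  assumes "gdsc C L A T"
    and "X \<in> cOb C" and "Y \<in> cOb C" and "Z \<in> cOb C"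
    and "f \<in> cHom C X Y" and "g \<in> cHom C X Z"
  shows "Dif C T X (cpair C f g)
       = ls_comp C L A X (Tl T X)
           (fib_pair C L X (Dif C T X f) (Dif C T X g))
           (reindex C L A X (cpair C f g) (bpo L (Tl T Y) (Tl T Z)) (phi_inv C L A T Y Z))"
proof -
  interpret gdsc_model C L A T
    using assms(1) by unfold_locales
  note ob = assms(2-4) and f = assms(5) and g = assms(6)
  let ?fg = "cpair C f g" and ?Tfg = "lpair L (Tm T f) (Tm T g)" and ?B = "bpo L (Tl T Y) (Tl T Z)"
  obtain k1 k2 where k: "phi_inv C L A T Y Z = (k1, k2)"
    by (cases "phi_inv C L A T Y Z")
  have fg: "?fg \<in> cHom C X (cprd C Y Z)" and Tfg: "?Tfg \<in> lHom L (tno L (Fo A X) (Tl T X)) ?B"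
    using f g ob by blast+
  have k2: "k2 \<in> lHom L (tno L (Fo A (cprd C Y Z)) ?B) (Tl T (cprd C Y Z))"
    using phi_inv_inverse[OF ob(2,3)] k by (simp add: ls_is_inverse_def)
  have "Tm T ?fg = snd (ls_comp C L A X (Tl T X) (?fg, ?Tfg) (k1, k2))"
    using Tmor_cpair[OF f g ob] k unfolding Tmor_def by (metis snd_conv)
  then show ?thesis
    unfolding Dif_def fib_pair_def snd_conv k using ls_comp_reindex[OF fg Tfg k2] ob by simp
qed

end
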